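(* Let $\Bbbk$ be a field of characteristic zero and $h_L,h_M,c_L,c_M\in\Bbbk$. As modules over the boundary Carrollian conformal algebra $\widehat{\mathfrak b}$, $$V(h_L,h_M,c_L,c_M)\cong \frac{U(\widehat{\mathfrak b})}{U(\widehat{\mathfrak b})\cdot(P_0-2h_M,\ C_M-c_M)},$$ where the denominator is the left ideal generated by $P_0-2h_M$ and $C_M-c_M$.
   Context: The BMS$_3$ algebra $\mathfrak{bms}$ over $\Bbbk$ has basis $\{L_n,M_n\mid n\in\mathbb{Z}\}\cup\{C_L,C_M\}$, with $C_L,C_M$ central and $[L_n,L_m]=(n-m)L_{n+m}+\frac1{12}n(n^2-1)\delta_{m,-n}C_L$, $[L_n,M_m]=(n-m)M_{n+m}+\frac1{12}n(n^2-1)\delta_{m,-n}C_M$, $[M_n,M_m]=0$. The BCCA $\widehat{\mathfrak b}$ is the subalgebra of $\mathfrak{bms}$ with basis $\{\mathcal O_n=L_n-L_{-n}\ (n\geq1),\ P_m=M_m+M_{-m}\ (m\geq 0),\ C_M\}$. The Verma module $V(h_L,h_M,c_L,c_M)$ is induced from the one-dimensional module $\Bbbk|h_L,h_M,c_L,c_M\rangle$ of $\mathrm{span}\{L_n,M_n\mid n\ge 0\}\oplus\Bbbk C_L\oplus\Bbbk C_M$ on which $L_0,M_0,C_L,C_M$ act by $h_L,h_M,c_L,c_M$ respectively and $L_n,M_n$ ($n>0$) act by $0$; it is regarded as a $\widehat{\mathfrak b}$-module by restriction. *)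

theory Defs
  imports Main
begin

text \<open>An element of the tensor (free associative) algebra T(g) over the field 'k,
  where g has basis indexed by the type 'b, is a finitely supported function
  from words over 'b to 'k.  All operations are defined on arbitrary functions;
  the relevant elements are those with finite support.\<close>

type_synonym ('b, 'k) tens = "'b list \<Rightarrow> 'k"

definition finsupp :: "('b, 'k::zero) tens \<Rightarrow> bool" where
  "finsupp f \<longleftrightarrow> finite {w. f w \<noteq> 0}"

definition tzero :: "('b, 'k::zero) tens" where
  "tzero = (\<lambda>w. 0)"

definition tadd :: "('b, 'k::plus) tens \<Rightarrow> ('b, 'k) tens \<Rightarrow> ('b, 'k) tens" where
  "tadd f g = (\<lambda>w. f w + g w)"

definition tsub :: "('b, 'k::minus) tens \<Rightarrow> ('b, 'k) tens \<Rightarrow> ('b, 'k) tens" where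
  "tsub f g = (\<lambda>w. f w - g w)"

definition tsmult :: "'k::times \<Rightarrow> ('b, 'k) tens \<Rightarrow> ('b, 'k) tens" where
  "tsmult c f = (\<lambda>w. c * f w)"

definition tmul :: "('b, 'k::comm_semiring_1) tens \<Rightarrow> ('b, 'k) tens \<Rightarrow> ('b, 'k) tens" where
  "tmul f g = (\<lambda>w. \<Sum>i\<le>length w. f (take i w) * g (drop i w))"

definition word :: "'b list \<Rightarrow> ('b, 'k::zero_neq_one) tens" where
  "word u = (\<lambda>w. if w = u then 1 else 0)"

definition tone :: "('b, 'k::zero_neq_one) tens" where
  "tone = word []"

definition gen :: "'b \<Rightarrow> ('b, 'k::zero_neq_one) tens" where
  "gen b = word [b]"

definition deg1 :: "('b, 'k::zero) tens \<Rightarrow> bool" where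
  "deg1 f \<longleftrightarrow> finsupp f \<and> (\<forall>w. length w \<noteq> 1 \<longrightarrow> f w = 0)"

inductive_set ideal_gen :: "('b, 'k::comm_ring_1) tens set \<Rightarrow> ('b, 'k) tens set"
  for S where
  zero: "tzero \<in> ideal_gen S"
| base: "s \<in> S \<Longrightarrow> s \<in> ideal_gen S"
| add: "x \<in> ideal_gen S \<Longrightarrow> y \<in> ideal_gen S \<Longrightarrow> tadd x y \<in> ideal_gen S"
| smult: "x \<in> ideal_gen S \<Longrightarrow> tsmult c x \<in> ideal_gen S"
| lmult: "x \<in> ideal_gen S \<Longrightarrow> finsupp a \<Longrightarrow> tmul a x \<in> ideal_gen S"
| rmult: "x \<in> ideal_gen S \<Longrightarrow> finsupp a \<Longrightarrow> tmul x a \<in> ideal_gen S"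

inductive_set lideal_gen :: "('b, 'k::comm_ring_1) tens set \<Rightarrow> ('b, 'k) tens set"
  for S where
  zero: "tzero \<in> lideal_gen S"
| base: "s \<in> S \<Longrightarrow> s \<in> lideal_gen S"
| add: "x \<in> lideal_gen S \<Longrightarrow> y \<in> lideal_gen S \<Longrightarrow> tadd x y \<in> lideal_gen S"
| smult: "x \<in> lideal_gen S \<Longrightarrow> tsmult c x \<in> lideal_gen S"
| lmult: "x \<in> lideal_gen S \<Longrightarrow> finsupp a \<Longrightarrow> tmul a x \<in> lideal_gen S"

fun wordprod :: "('b \<Rightarrow> ('c, 'k::comm_ring_1) tens) \<Rightarrow> 'b list \<Rightarrow> ('c, 'k) tens" where
  "wordprod \<phi> [] = tone"
| "wordprod \<phi> (b # w) = tmul (\<phi> b) (wordprod \<phi> w)"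

definition tens_hom :: "('b \<Rightarrow> ('c, 'k::comm_ring_1) tens) \<Rightarrow> ('b, 'k) tens \<Rightarrow> ('c, 'k) tens" where
  "tens_hom \<phi> f = (\<lambda>u. \<Sum>w\<in>{w. f w \<noteq> 0}. f w * wordprod \<phi> w u)"

definition br_lin :: "('b \<Rightarrow> 'b \<Rightarrow> ('b, 'k::comm_ring_1) tens)
    \<Rightarrow> ('b, 'k) tens \<Rightarrow> ('b, 'k) tens \<Rightarrow> ('b, 'k) tens" where
  "br_lin br x y = (\<lambda>u. \<Sum>c\<in>{c. x [c] \<noteq> 0}. \<Sum>d\<in>{d. y [d] \<noteq> 0}. x [c] * y [d] * br c d u)"

datatype bms = L int | M int | CL | CM

definition bms_br :: "bms \<Rightarrow> bms \<Rightarrow> (bms, 'k::field_char_0) tens" where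
  "bms_br a b = (case (a, b) of
      (L n, L m) \<Rightarrow> tadd (tsmult (of_int (n - m)) (gen (L (n + m))))
                        (if m = - n then tsmult (of_int (n * (n^2 - 1)) / 12) (gen CL) else tzero)
    | (L n, M m) \<Rightarrow> tadd (tsmult (of_int (n - m)) (gen (M (n + m))))
                        (if m = - n then tsmult (of_int (n * (n^2 - 1)) / 12) (gen CM) else tzero)
    | (M n, L m) \<Rightarrow> tsmult (-1) (tadd (tsmult (of_int (m - n)) (gen (M (m + n))))
                        (if n = - m then tsmult (of_int (m * (m^2 - 1)) / 12) (gen CM) else tzero))
    | _ \<Rightarrow> tzero)"

definition bms_rel :: "(bms, 'k::field_char_0) tens set" where
  "bms_rel = {tsub (tsub (tmul (gen a) (gen b)) (tmul (gen b) (gen a))) (bms_br a b) | a b. True}"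

text \<open>The Verma module V(h_L,h_M,c_L,c_M) = U(bms) \<otimes>_{U(bms_+)} k, presented as
  T(bms) modulo the left ideal generated by the UEA relations and
  x - \<lambda>(x) for x in the basis of bms_+ = span{L_n, M_n | n \<ge> 0} + k C_L + k C_M.\<close>
definition verma_ideal :: "'k::field_char_0 \<Rightarrow> 'k \<Rightarrow> 'k \<Rightarrow> 'k \<Rightarrow> (bms, 'k) tens set" where
  "verma_ideal hL hM cL cM = lideal_gen (ideal_gen bms_rel \<union>
      ({gen (L n) | n. n > 0} \<union> {gen (M n) | n. n > 0} \<union>
       {tsub (gen (L 0)) (tsmult hL tone), tsub (gen (M 0)) (tsmult hM tone),
        tsub (gen CL) (tsmult cL tone), tsub (gen CM) (tsmult cM tone)}))"

text \<open>Basis of bhat: Ob k stands for O_{k+1} = L_{k+1} - L_{-(k+1)} (k \<ge> 0, i.e. n = k+1 \<ge> 1),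
  Pb m stands for P_m = M_m + M_{-m} (m \<ge> 0), and CMb stands for C_M.\<close>
datatype bhat = Ob nat | Pb nat | CMb

definition bhat_emb :: "bhat \<Rightarrow> (bms, 'k::field_char_0) tens" where
  "bhat_emb x = (case x of
      Ob k \<Rightarrow> tsub (gen (L (int k + 1))) (gen (L (- (int k + 1))))
    | Pb m \<Rightarrow> tadd (gen (M (int m))) (gen (M (- int m)))
    | CMb \<Rightarrow> gen CM)"

text \<open>Defining relations of U(bhat) inside T(bhat): the bracket of bhat is the
  restriction of the bracket of bms, i.e. [a,b] is the (unique) degree-one
  element beta of T(bhat) whose image in bms is [emb a, emb b].\<close>
definition bhat_rel :: "(bhat, 'k::field_char_0) tens set" where
  "bhat_rel = {tsub (tsub (tmul (gen a) (gen b)) (tmul (gen b) (gen a))) \<beta> | a b \<beta>.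
       deg1 \<beta> \<and> tens_hom bhat_emb \<beta> = br_lin bms_br (bhat_emb a) (bhat_emb b)}"

text \<open>U(bhat)/U(bhat)(P_0 - 2h_M, C_M - c_M), presented as T(bhat) modulo a left ideal.\<close>
definition quot_ideal :: "'k::field_char_0 \<Rightarrow> 'k \<Rightarrow> (bhat, 'k) tens set" where
  "quot_ideal hM cM = lideal_gen (ideal_gen bhat_rel \<union>
      {tsub (gen (Pb 0)) (tsmult (2 * hM) tone), tsub (gen CMb) (tsmult cM tone)})"

text \<open>Isomorphism of bhat-modules T(bhat)/K1 \<cong> T(bms)/K2, where bhat acts on the
  first by left multiplication with generators and on the second by left
  multiplication with their images in bms.  A map phi on representatives
  induces a well-defined linear bijection of the quotients that commutes with
  the action of every basis element of bhat (hence of U(bhat)).\<close>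
definition bhat_mod_iso :: "(bhat, 'k::field_char_0) tens set \<Rightarrow> (bms, 'k) tens set \<Rightarrow> bool" where
  "bhat_mod_iso K1 K2 \<longleftrightarrow> (\<exists>\<phi> :: (bhat, 'k) tens \<Rightarrow> (bms, 'k) tens.
     (\<forall>x. finsupp x \<longrightarrow> finsupp (\<phi> x)) \<and>
     (\<forall>x y. finsupp x \<longrightarrow> finsupp y \<longrightarrow> tsub x y \<in> K1 \<longrightarrow> tsub (\<phi> x) (\<phi> y) \<in> K2) \<and>
     (\<forall>x y. finsupp x \<longrightarrow> finsupp y \<longrightarrow>
        tsub (\<phi> (tadd x y)) (tadd (\<phi> x) (\<phi> y)) \<in> K2) \<and>
     (\<forall>c x. finsupp x \<longrightarrow> tsub (\<phi> (tsmult c x)) (tsmult c (\<phi> x)) \<in> K2) \<and>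
     (\<forall>a x. finsupp x \<longrightarrow> tsub (\<phi> (tmul (gen a) x)) (tmul (bhat_emb a) (\<phi> x)) \<in> K2) \<and>
     (\<forall>x y. finsupp x \<longrightarrow> finsupp y \<longrightarrow> tsub (\<phi> x) (\<phi> y) \<in> K2 \<longrightarrow> tsub x y \<in> K1) \<and>
     (\<forall>y. finsupp y \<longrightarrow> (\<exists>x. finsupp x \<and> tsub y (\<phi> x) \<in> K2)))"

end

theory Submission
  imports Defs
begin

text \<open>As vector spaces \<open>bms = bhat + bms\<^sub>+\<close>, where \<open>bms\<^sub>+\<close> is spanned by \<open>L\<^sub>n, M\<^sub>n\<close> (\<open>n \<ge> 0\<close>)
  and the central elements, since \<open>L\<^sub>-\<^sub>n = O\<^sub>-\<^sub>n + L\<^sub>n\<close> and \<open>M\<^sub>-\<^sub>n = P\<^sub>n - M\<^sub>n\<close>; the intersection is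
  spanned by \<open>P\<^sub>0 = 2 M\<^sub>0\<close> and \<open>C\<^sub>M\<close>, which act on the highest weight vector by \<open>2 h\<^sub>M\<close> and \<open>c\<^sub>M\<close>.
  The inclusion \<open>U(bhat) \<rightarrow> U(bms)\<close> therefore induces a \<open>bhat\<close>-module map \<open>z \<mapsto> z v\<close> from the
  quotient to the Verma module, and it is surjective.

  For the inverse, the quotient \<open>U(bhat)/U(bhat)(P\<^sub>0 - 2h\<^sub>M, C\<^sub>M - c\<^sub>M)\<close> is made into a
  \<open>bms\<close>-module: \<open>b\<close> acts on \<open>1\<close> through the decomposition above, \<open>bms\<^sub>+\<close> acting by the weights,
  and on \<open>c y\<close> by \<open>b (c y) = c (b y) + [b, c] y\<close>.  The Jacobi identity of \<open>bms\<close> shows that this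
  respects the relations of \<open>U(bhat)\<close> and of \<open>U(bms)\<close>, and \<open>1\<close> is a highest weight vector, so
  \<open>u \<mapsto> u 1\<close> is defined on the Verma module.  Both composites are the identity, as an induction
  on words shows.\<close>

section \<open>Finitely supported tensors\<close>

definition supp :: "('b, 'k::zero) tens \<Rightarrow> 'b list set" where
  "supp f = {w. f w \<noteq> 0}"

lemma finsupp_iff_finite_supp: "finsupp f \<longleftrightarrow> finite (supp f)"
  by (simp add: finsupp_def supp_def)

lemma finsupp_tzero [simp]: "finsupp tzero"
  by (simp add: finsupp_def tzero_def)

lemma finsupp_tadd [simp]:
  "finsupp f \<Longrightarrow> finsupp g \<Longrightarrow> finsupp (tadd f (g :: ('b, 'k::monoid_add) tens))"
  unfolding finsupp_def tadd_def
  by (rule finite_subset[of _ "{w. f w \<noteq> 0} \<union> {w. g w \<noteq> 0}"]) auto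

lemma finsupp_tsub [simp]:
  "finsupp f \<Longrightarrow> finsupp g \<Longrightarrow> finsupp (tsub f (g :: ('b, 'k::group_add) tens))"
  unfolding finsupp_def tsub_def
  by (rule finite_subset[of _ "{w. f w \<noteq> 0} \<union> {w. g w \<noteq> 0}"]) auto

lemma finsupp_tsmult [simp]: "finsupp f \<Longrightarrow> finsupp (tsmult c (f :: ('b, 'k::mult_zero) tens))"
  unfolding finsupp_def tsmult_def
  by (rule finite_subset[of _ "{w. f w \<noteq> 0}"]) auto

lemma finsupp_word [simp]: "finsupp (word u)"
  unfolding finsupp_def word_def
  by (rule finite_subset[of _ "{u}"]) auto

lemma finsupp_tone [simp]: "finsupp tone"
  by (simp add: tone_def)

lemma finsupp_gen [simp]: "finsupp (gen b)"
  by (simp add: gen_def)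

lemma finsupp_tmul [simp]:
  assumes "finsupp f" "finsupp g"
  shows "finsupp (tmul f g)"
proof -
  have "supp (tmul f g) \<subseteq> (\<lambda>(u, v). u @ v) ` (supp f \<times> supp g)"
  proof
    fix w assume "w \<in> supp (tmul f g)"
    then have "tmul f g w \<noteq> 0"
      by (simp add: supp_def)
    then have "(\<Sum>i\<le>length w. f (take i w) * g (drop i w)) \<noteq> 0"
      unfolding tmul_def .
    then obtain i where "f (take i w) * g (drop i w) \<noteq> 0"
      using sum.not_neutral_contains_not_neutral by blast
    then show "w \<in> (\<lambda>(u, v). u @ v) ` (supp f \<times> supp g)"
      by (intro image_eqI[of _ _ "(take i w, drop i w)"]) (auto simp: supp_def)
  qed
  with assms show ?thesis
    by (meson finite_SigmaI finite_imageI finite_subset finsupp_iff_finite_supp)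
qed

lemma tadd_tzero [simp]: "tadd f tzero = (f :: ('b, 'k::monoid_add) tens)" "tadd tzero f = f"
  by (auto simp: tadd_def tzero_def)

lemma tsub_tzero [simp]: "tsub f tzero = (f :: ('b, 'k::group_add) tens)"
  by (simp add: tsub_def tzero_def)

lemma tsub_self [simp]: "tsub f f = (tzero :: ('b, 'k::ab_group_add) tens)"
  by (auto simp: tsub_def tzero_def)

lemma tsmult_tzero [simp]: "tsmult c tzero = (tzero :: ('b, 'k::mult_zero) tens)"
  by (auto simp: tsmult_def tzero_def)

lemma tsmult_0 [simp]: "tsmult 0 f = (tzero :: ('b, 'k::mult_zero) tens)"
  by (auto simp: tsmult_def tzero_def)

lemma tsmult_tsmult [simp]: "tsmult a (tsmult b f) = tsmult (a * b) (f :: ('b, 'k::semigroup_mult) tens)"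
  by (auto simp: tsmult_def mult.assoc)

lemma tsub_eq_tadd_tsmult: "tsub f g = tadd f (tsmult (-1) (g :: ('b, 'k::ring_1) tens))"
  by (auto simp: tsub_def tadd_def tsmult_def)

lemma tsmult_tadd: "tsmult a (tadd f g) = tadd (tsmult a f) (tsmult a (g :: ('b, 'k::semiring) tens))"
  by (auto simp: tsmult_def tadd_def distrib_left)

lemma tzero_apply: "tzero w = 0"
  by (simp add: tzero_def)

lemmas tens_pointwise = fun_eq_iff tadd_def tsub_def tsmult_def

lemma tmul_tadd_left: "tmul (tadd f g) h = tadd (tmul f h) (tmul g h)"
  by (auto simp: tmul_def tadd_def distrib_right sum.distrib)

lemma tmul_tadd_right: "tmul h (tadd f g) = tadd (tmul h f) (tmul h g)"
  by (auto simp: tmul_def tadd_def distrib_left sum.distrib)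

lemma tmul_tsub_left: "tmul (tsub f g) h = tsub (tmul f h) (tmul (g :: ('b, 'k::comm_ring_1) tens) h)"
  by (auto simp: tmul_def tsub_def left_diff_distrib sum_subtractf)

lemma tmul_tsub_right: "tmul h (tsub f g) = tsub (tmul h f) (tmul h (g :: ('b, 'k::comm_ring_1) tens))"
  by (auto simp: tmul_def tsub_def right_diff_distrib sum_subtractf)

lemma tmul_tsmult_left: "tmul (tsmult c f) h = tsmult c (tmul f h)"
  by (auto simp: tmul_def tsmult_def sum_distrib_left mult.assoc)

lemma tmul_tsmult_right: "tmul h (tsmult c f) = tsmult c (tmul h f)"
  by (auto simp: tmul_def tsmult_def sum_distrib_left mult.left_commute)

lemma tmul_tzero_left [simp]: "tmul tzero h = tzero"
  by (auto simp: tmul_def tzero_def)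

lemma tmul_tzero_right [simp]: "tmul h tzero = tzero"
  by (auto simp: tmul_def tzero_def)

lemma tmul_word_word: "tmul (word u) (word v) = (word (u @ v) :: ('b, 'k::comm_ring_1) tens)"
proof
  fix w
  have "tmul (word u) (word v) w = (\<Sum>i\<le>length w. if i = length u \<and> w = u @ v then 1 else (0::'k))"
    unfolding tmul_def word_def
  proof (rule sum.cong[OF refl])
    fix i assume "i \<in> {..length w}"
    then have i: "i \<le> length w" by simp
    show "(if take i w = u then 1 else 0) * (if drop i w = v then 1 else 0) =
        (if i = length u \<and> w = u @ v then 1 else (0::'k))"
    proof (cases "take i w = u \<and> drop i w = v")
      case True
      then have "w = u @ v" by (metis append_take_drop_id)
      moreover have "i = length u" using True i by auto
      ultimately show ?thesis using True by simp
    qed auto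
  qed
  also have "\<dots> = word (u @ v) w"
    by (auto simp: word_def sum.delta)
  finally show "tmul (word u) (word v) w = (word (u @ v) w :: 'k)" .
qed

lemma tmul_gen_word: "tmul (gen b) (word w) = (word (b # w) :: ('b, 'k::comm_ring_1) tens)"
  by (simp add: gen_def tmul_word_word)

lemma finsupp_induct [consumes 1, case_names zero add smult word]:
  assumes "finsupp (f :: ('b, 'k::comm_ring_1) tens)"
    and zero: "P tzero"
    and add: "\<And>x y. finsupp x \<Longrightarrow> finsupp y \<Longrightarrow> P x \<Longrightarrow> P y \<Longrightarrow> P (tadd x y)"
    and smult: "\<And>c x. finsupp x \<Longrightarrow> P x \<Longrightarrow> P (tsmult c x)"
    and word: "\<And>u. P (word u)"
  shows "P f"
proof -
  have "P f" if "finite S" "supp f = S" for S f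
    using that
  proof (induction S arbitrary: f rule: finite_induct)
    case empty
    then have "f = tzero" by (auto simp: supp_def tzero_def)
    then show ?case using zero by simp
  next
    case (insert u S)
    let ?g = "f(u := 0)"
    have "supp ?g = S" using insert by (auto simp: supp_def)
    with insert have "P ?g" "finsupp ?g" by (simp_all add: finsupp_iff_finite_supp)
    moreover have "f = tadd (tsmult (f u) (word u)) ?g"
      by (auto simp: tadd_def tsmult_def word_def)
    ultimately show ?case using add smult word by (metis finsupp_tsmult finsupp_word)
  qed
  with assms(1) show ?thesis by (simp add: finsupp_iff_finite_supp)
qed

lemma tmul_tone_left [simp]: "finsupp f \<Longrightarrow> tmul tone f = (f :: ('b, 'k::comm_ring_1) tens)"
  by (induction f rule: finsupp_induct)
     (simp_all add: tmul_tadd_right tmul_tsmult_right tone_def tmul_word_word)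

lemma tmul_tone_right [simp]: "finsupp f \<Longrightarrow> tmul f tone = (f :: ('b, 'k::comm_ring_1) tens)"
  by (induction f rule: finsupp_induct)
     (simp_all add: tmul_tadd_left tmul_tsmult_left tone_def tmul_word_word)

lemma tmul_assoc:
  fixes x y z :: "('b, 'k::comm_ring_1) tens"
  assumes "finsupp x" "finsupp y" "finsupp z"
  shows "tmul (tmul x y) z = tmul x (tmul y z)"
  using assms
proof (induction x rule: finsupp_induct)
  case (word u)
  show ?case using word
  proof (induction y rule: finsupp_induct)
    case (word v)
    show ?case using word
      by (induction z rule: finsupp_induct)
         (simp_all add: tmul_tadd_left tmul_tadd_right tmul_tsmult_left tmul_tsmult_right
             tmul_word_word)
  qed (simp_all add: tmul_tadd_left tmul_tadd_right tmul_tsmult_left tmul_tsmult_right)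
qed (simp_all add: tmul_tadd_left tmul_tadd_right tmul_tsmult_left tmul_tsmult_right)

definition is_lideal :: "('b, 'k::comm_ring_1) tens set \<Rightarrow> bool" where
  "is_lideal K \<longleftrightarrow> tzero \<in> K \<and> (\<forall>x\<in>K. \<forall>y\<in>K. tadd x y \<in> K) \<and> (\<forall>c. \<forall>x\<in>K. tsmult c x \<in> K)
     \<and> (\<forall>x\<in>K. \<forall>a. finsupp a \<longrightarrow> tmul a x \<in> K)"

lemma is_lideal_lideal_gen: "is_lideal (lideal_gen S)"
  by (auto simp: is_lideal_def intro: lideal_gen.intros)

lemma is_lideal_ideal_gen: "is_lideal (ideal_gen S)"
  by (auto simp: is_lideal_def intro: ideal_gen.intros)

context
  fixes K :: "('b, 'k::comm_ring_1) tens set"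
  assumes K: "is_lideal K"
begin

lemma lideal_tzero: "tzero \<in> K"
  using K by (simp add: is_lideal_def)

lemma lideal_tadd: "x \<in> K \<Longrightarrow> y \<in> K \<Longrightarrow> tadd x y \<in> K"
  using K by (simp add: is_lideal_def)

lemma lideal_tsmult: "x \<in> K \<Longrightarrow> tsmult c x \<in> K"
  using K by (simp add: is_lideal_def)

lemma lideal_tmul: "x \<in> K \<Longrightarrow> finsupp a \<Longrightarrow> tmul a x \<in> K"
  using K by (simp add: is_lideal_def)

lemma lideal_tsub: "x \<in> K \<Longrightarrow> y \<in> K \<Longrightarrow> tsub x y \<in> K"
  by (simp add: tsub_eq_tadd_tsmult lideal_tadd lideal_tsmult)

end

lemma ideal_gen_finsupp: "x \<in> ideal_gen S \<Longrightarrow> (\<And>s. s \<in> S \<Longrightarrow> finsupp s) \<Longrightarrow> finsupp x"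
  by (induction x rule: ideal_gen.induct) auto

lemma lideal_gen_finsupp: "x \<in> lideal_gen S \<Longrightarrow> (\<And>s. s \<in> S \<Longrightarrow> finsupp s) \<Longrightarrow> finsupp x"
  by (induction x rule: lideal_gen.induct) auto

definition lin_on :: "(('b, 'k) tens \<Rightarrow> bool) \<Rightarrow> (('b, 'k::comm_ring_1) tens \<Rightarrow> ('c, 'k) tens) \<Rightarrow> bool" where
  "lin_on P F \<longleftrightarrow> (\<forall>x y. P x \<longrightarrow> P y \<longrightarrow> F (tadd x y) = tadd (F x) (F y)) \<and>
     (\<forall>c x. P x \<longrightarrow> F (tsmult c x) = tsmult c (F x))"

lemma lin_onI:
  assumes "\<And>x y. P x \<Longrightarrow> P y \<Longrightarrow> F (tadd x y) = tadd (F x) (F y)"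
    and "\<And>c x. P x \<Longrightarrow> F (tsmult c x) = tsmult c (F x)"
  shows "lin_on P F"
  using assms by (simp add: lin_on_def)

lemma lin_on_tadd: "lin_on P F \<Longrightarrow> P x \<Longrightarrow> P y \<Longrightarrow> F (tadd x y) = tadd (F x) (F y)"
  by (simp add: lin_on_def)

lemma lin_on_tsmult: "lin_on P F \<Longrightarrow> P x \<Longrightarrow> F (tsmult c x) = tsmult c (F x)"
  by (simp add: lin_on_def)

lemma lin_on_tzero: "lin_on P F \<Longrightarrow> P tzero \<Longrightarrow> F tzero = tzero"
  using lin_on_tsmult[of P F tzero 0] by simp

lemma lin_on_tsub:
  assumes "lin_on P F" "P x" "P y" "P (tsmult (-1) y)"
  shows "F (tsub x y) = tsub (F x) (F y)"
  using assms by (simp add: tsub_eq_tadd_tsmult lin_on_tadd lin_on_tsmult)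

lemma lin_on_diff:
  assumes "lin_on P F" "lin_on P G"
  shows "lin_on P (\<lambda>x. tsub (F x) (G x))"
  by (intro lin_onI)
     (simp_all add: lin_on_tadd[OF assms(1)] lin_on_tadd[OF assms(2)] lin_on_tsmult[OF assms(1)]
        lin_on_tsmult[OF assms(2)], simp_all add: tens_pointwise algebra_simps)

lemma lin_on_finsupp_mem:
  assumes F: "lin_on finsupp F" and K: "is_lideal K"
    and words: "\<And>w. F (word w) \<in> K" and y: "finsupp y"
  shows "F y \<in> K"
  using y
proof (induction y rule: finsupp_induct)
  case zero
  show ?case using lin_on_tzero[OF F] lideal_tzero[OF K] by simp
qed (simp_all add: lin_on_tadd[OF F] lin_on_tsmult[OF F] lideal_tadd[OF K] lideal_tsmult[OF K] words)

lemma lin_on_finsupp_eq: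
  assumes "lin_on finsupp F" "lin_on finsupp G" "\<And>w. F (word w) = G (word w)" "finsupp y"
  shows "F y = G y"
proof -
  have "is_lideal {tzero :: ('c, 'k::comm_ring_1) tens}"
    by (simp add: is_lideal_def)
  then have "tsub (F y) (G y) \<in> {tzero}"
    using assms by (rule_tac lin_on_finsupp_mem[OF lin_on_diff]) simp_all
  then show ?thesis by (auto simp: tens_pointwise tzero_def)
qed

definition lin_words :: "('b list \<Rightarrow> ('c, 'k::comm_ring_1) tens) \<Rightarrow> ('b, 'k) tens \<Rightarrow> ('c, 'k) tens" where
  "lin_words g f = (\<lambda>u. \<Sum>w\<in>supp f. f w * g w u)"

lemma lin_words_superset:
  assumes "finite A" "supp f \<subseteq> A"
  shows "lin_words g f = (\<lambda>u. \<Sum>w\<in>A. f w * g w u)"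
  unfolding lin_words_def
proof
  fix u
  show "(\<Sum>w\<in>supp f. f w * g w u) = (\<Sum>w\<in>A. f w * g w u)"
    by (rule sum.mono_neutral_left) (use assms in \<open>auto simp: supp_def\<close>)
qed

lemma lin_on_lin_words: "lin_on finsupp (lin_words g :: ('b, 'k::comm_ring_1) tens \<Rightarrow> ('c, 'k) tens)"
proof (rule lin_onI)
  fix x y :: "('b, 'k) tens" assume "finsupp x" "finsupp y"
  then have A: "finite (supp x \<union> supp y)" by (simp add: finsupp_iff_finite_supp)
  have "supp (tadd x y) \<subseteq> supp x \<union> supp y" by (auto simp: supp_def tadd_def)
  then show "lin_words g (tadd x y) = tadd (lin_words g x) (lin_words g y)"
    using lin_words_superset[OF A, of "tadd x y" g] lin_words_superset[OF A, of x g]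
      lin_words_superset[OF A, of y g]
    by (auto simp: tadd_def distrib_right sum.distrib)
next
  fix c and x :: "('b, 'k) tens" assume "finsupp x"
  then have A: "finite (supp x)" by (simp add: finsupp_iff_finite_supp)
  have "supp (tsmult c x) \<subseteq> supp x" by (auto simp: supp_def tsmult_def)
  then show "lin_words g (tsmult c x) = tsmult c (lin_words g x)"
    using lin_words_superset[OF A, of "tsmult c x" g] lin_words_superset[OF A, of x g]
    by (auto simp: tsmult_def sum_distrib_left mult.assoc)
qed

lemmas lin_words_tadd = lin_on_tadd[OF lin_on_lin_words]
lemmas lin_words_tsmult = lin_on_tsmult[OF lin_on_lin_words]

lemma lin_words_tzero [simp]: "lin_words g tzero = tzero"
  by (simp add: lin_words_def supp_def tzero_def)

lemma lin_words_word [simp]: "lin_words g (word v) = g v"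
proof -
  have "lin_words g (word v) = (\<lambda>u. \<Sum>w\<in>{v}. word v w * g w u)"
    by (rule lin_words_superset) (auto simp: supp_def word_def)
  then show ?thesis by (simp add: word_def)
qed

lemma finsupp_lin_words [simp]:
  assumes "finsupp f" "\<And>w. finsupp (g w)"
  shows "finsupp (lin_words g f)"
  using assms(1) by (induction f rule: finsupp_induct) (simp_all add: lin_words_tadd
      lin_words_tsmult assms(2))

definition supp1 :: "('b, 'k::zero) tens \<Rightarrow> 'b set" where
  "supp1 f = {b. f [b] \<noteq> 0}"

lemma deg1_finite_supp1: "deg1 f \<Longrightarrow> finite (supp1 f)"
proof -
  assume "deg1 f"
  then have "finite (hd ` {w. f w \<noteq> 0})" by (simp add: deg1_def finsupp_def)
  moreover have "supp1 f \<subseteq> hd ` {w. f w \<noteq> 0}"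
    by (auto simp: supp1_def intro!: image_eqI[of _ _ "[_]"])
  ultimately show ?thesis by (rule finite_subset[rotated])
qed

lemma deg1_finsupp: "deg1 f \<Longrightarrow> finsupp f"
  by (simp add: deg1_def)

lemma deg1_tzero [simp]: "deg1 tzero"
  unfolding deg1_def by (intro conjI finsupp_tzero) (simp add: tzero_def)

lemma deg1_gen [simp]: "deg1 (gen b)"
  unfolding deg1_def by (intro conjI finsupp_gen) (simp add: gen_def word_def)

lemma deg1_tadd [simp]: "deg1 f \<Longrightarrow> deg1 g \<Longrightarrow> deg1 (tadd f (g :: ('b, 'k::monoid_add) tens))"
  unfolding deg1_def using finsupp_tadd[of f g] by (auto simp: tadd_def)

lemma deg1_tsub [simp]: "deg1 f \<Longrightarrow> deg1 g \<Longrightarrow> deg1 (tsub f (g :: ('b, 'k::group_add) tens))"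
  unfolding deg1_def using finsupp_tsub[of f g] by (auto simp: tsub_def)

lemma deg1_tsmult [simp]: "deg1 f \<Longrightarrow> deg1 (tsmult c (f :: ('b, 'k::mult_zero) tens))"
  unfolding deg1_def using finsupp_tsmult[of f c] by (auto simp: tsmult_def)

lemma deg1_induct [consumes 1, case_names zero add smult gen]:
  assumes "deg1 (f :: ('b, 'k::comm_ring_1) tens)"
    and zero: "P tzero"
    and add: "\<And>x y. deg1 x \<Longrightarrow> deg1 y \<Longrightarrow> P x \<Longrightarrow> P y \<Longrightarrow> P (tadd x y)"
    and smult: "\<And>c x. deg1 x \<Longrightarrow> P x \<Longrightarrow> P (tsmult c x)"
    and gen: "\<And>b. P (gen b)"
  shows "P f"
proof -
  have "P f" if "finite S" "deg1 f" "supp1 f = S" for S f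
    using that
  proof (induction S arbitrary: f rule: finite_induct)
    case empty
    then have "f = tzero"
      by (auto simp: supp1_def tzero_def deg1_def fun_eq_iff) (metis length_0_conv length_Suc_conv)
    then show ?case using zero by simp
  next
    case (insert b S)
    let ?g = "f([b] := 0)"
    have "deg1 ?g"
      using insert by (auto simp: deg1_def finsupp_def intro: finite_subset[of _ "{w. f w \<noteq> 0}"])
    moreover have "supp1 ?g = S" using insert by (auto simp: supp1_def)
    ultimately have "P ?g" using insert.IH by blast
    moreover have "f = tadd (tsmult (f [b]) (gen b)) ?g"
      by (auto simp: tadd_def tsmult_def gen_def word_def)
    ultimately show ?case using add smult gen \<open>deg1 ?g\<close> by (metis deg1_gen deg1_tsmult)
  qed
  with assms(1) show ?thesis using deg1_finite_supp1 by blast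
qed

lemma lin_on_deg1_mem:
  assumes F: "lin_on deg1 F" and K: "is_lideal K"
    and gens: "\<And>b. F (gen b) \<in> K" and f: "deg1 f"
  shows "F f \<in> K"
  using f
proof (induction f rule: deg1_induct)
  case zero
  show ?case using lin_on_tzero[OF F] lideal_tzero[OF K] by simp
qed (simp_all add: lin_on_tadd[OF F] lin_on_tsmult[OF F] lideal_tadd[OF K] lideal_tsmult[OF K] gens)

definition lin_gens :: "('b \<Rightarrow> ('c, 'k::comm_ring_1) tens) \<Rightarrow> ('b, 'k) tens \<Rightarrow> ('c, 'k) tens" where
  "lin_gens g f = (\<lambda>u. \<Sum>b\<in>supp1 f. f [b] * g b u)"

lemma lin_gens_superset:
  assumes "finite A" "supp1 f \<subseteq> A"
  shows "lin_gens g f = (\<lambda>u. \<Sum>b\<in>A. f [b] * g b u)"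
  unfolding lin_gens_def
proof
  fix u
  show "(\<Sum>b\<in>supp1 f. f [b] * g b u) = (\<Sum>b\<in>A. f [b] * g b u)"
    by (rule sum.mono_neutral_left) (use assms in \<open>auto simp: supp1_def\<close>)
qed

lemma lin_on_lin_gens: "lin_on deg1 (lin_gens g :: ('b, 'k::comm_ring_1) tens \<Rightarrow> ('c, 'k) tens)"
proof (rule lin_onI)
  fix x y :: "('b, 'k) tens" assume "deg1 x" "deg1 y"
  then have A: "finite (supp1 x \<union> supp1 y)" by (simp add: deg1_finite_supp1)
  have "supp1 (tadd x y) \<subseteq> supp1 x \<union> supp1 y" by (auto simp: supp1_def tadd_def)
  then show "lin_gens g (tadd x y) = tadd (lin_gens g x) (lin_gens g y)"
    using lin_gens_superset[OF A, of "tadd x y" g] lin_gens_superset[OF A, of x g]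
      lin_gens_superset[OF A, of y g]
    by (auto simp: tadd_def distrib_right sum.distrib)
next
  fix c and x :: "('b, 'k) tens" assume "deg1 x"
  then have A: "finite (supp1 x)" by (simp add: deg1_finite_supp1)
  have "supp1 (tsmult c x) \<subseteq> supp1 x" by (auto simp: supp1_def tsmult_def)
  then show "lin_gens g (tsmult c x) = tsmult c (lin_gens g x)"
    using lin_gens_superset[OF A, of "tsmult c x" g] lin_gens_superset[OF A, of x g]
    by (auto simp: tsmult_def sum_distrib_left mult.assoc)
qed

lemmas lin_gens_tadd = lin_on_tadd[OF lin_on_lin_gens]
lemmas lin_gens_tsmult = lin_on_tsmult[OF lin_on_lin_gens]

lemma lin_gens_tsub: "deg1 x \<Longrightarrow> deg1 y \<Longrightarrow> lin_gens g (tsub x y) = tsub (lin_gens g x) (lin_gens g y)"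
  by (simp add: lin_on_tsub[OF lin_on_lin_gens])

lemma lin_gens_tzero [simp]: "lin_gens g tzero = tzero"
  by (simp add: lin_gens_def supp1_def tzero_def)

lemma lin_gens_gen [simp]: "lin_gens g (gen b) = g b"
proof -
  have "lin_gens g (gen b) = (\<lambda>u. \<Sum>c\<in>{b}. gen b [c] * g c u)"
    by (rule lin_gens_superset) (auto simp: supp1_def gen_def word_def)
  then show ?thesis by (simp add: gen_def word_def)
qed

lemma finsupp_lin_gens [simp]:
  assumes "deg1 f" "\<And>b. finsupp (g b)"
  shows "finsupp (lin_gens g f)"
  using assms(1) by (induction f rule: deg1_induct) (simp_all add: lin_gens_tadd lin_gens_tsmult
      assms(2))

lemma deg1_lin_gens [simp]:
  assumes "deg1 f" "\<And>b. deg1 (g b)"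
  shows "deg1 (lin_gens g f)"
  using assms(1) by (induction f rule: deg1_induct) (simp_all add: lin_gens_tadd lin_gens_tsmult
      assms(2))

lemma lin_gens_fun_tadd: "lin_gens (\<lambda>b. tadd (F b) (G b)) f = tadd (lin_gens F f) (lin_gens G f)"
  by (auto simp: lin_gens_def tadd_def distrib_left sum.distrib)

lemma lin_gens_fun_tsmult: "lin_gens (\<lambda>b. tsmult c (F b)) f = tsmult c (lin_gens F f)"
  by (auto simp: lin_gens_def tsmult_def sum_distrib_left mult.left_commute)

lemma lin_gens_fun_tzero [simp]: "lin_gens (\<lambda>b. tzero) f = tzero"
  by (auto simp: lin_gens_def tzero_def)

lemma tens_hom_eq_lin_words: "tens_hom \<phi> = lin_words (wordprod \<phi>)"
  by (auto simp: tens_hom_def lin_words_def supp_def)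

lemma lin_on_tens_hom: "lin_on finsupp (tens_hom \<phi>)"
  by (simp add: tens_hom_eq_lin_words lin_on_lin_words)

lemmas tens_hom_tadd = lin_on_tadd[OF lin_on_tens_hom]
lemmas tens_hom_tsmult = lin_on_tsmult[OF lin_on_tens_hom]

lemma tens_hom_tsub: "finsupp x \<Longrightarrow> finsupp y \<Longrightarrow> tens_hom \<phi> (tsub x y) = tsub (tens_hom \<phi> x) (tens_hom \<phi> y)"
  by (simp add: lin_on_tsub[OF lin_on_tens_hom])

lemma tens_hom_word [simp]: "tens_hom \<phi> (word w) = wordprod \<phi> w"
  by (simp add: tens_hom_eq_lin_words)

lemma tens_hom_tzero [simp]: "tens_hom \<phi> tzero = tzero"
  by (simp add: tens_hom_eq_lin_words)

lemma tens_hom_tone [simp]: "tens_hom \<phi> tone = tone"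
  by (simp add: tone_def)

lemma finsupp_wordprod [simp]: "(\<And>b. finsupp (\<phi> b)) \<Longrightarrow> finsupp (wordprod \<phi> w)"
  by (induction w) simp_all

lemma tens_hom_gen [simp]: "finsupp (\<phi> b) \<Longrightarrow> tens_hom \<phi> (gen b) = \<phi> b"
  by (simp add: gen_def)

lemma finsupp_tens_hom [simp]: "(\<And>b. finsupp (\<phi> b)) \<Longrightarrow> finsupp x \<Longrightarrow> finsupp (tens_hom \<phi> x)"
  by (simp add: tens_hom_eq_lin_words)

lemma wordprod_append:
  assumes "\<And>b. finsupp (\<phi> b)"
  shows "wordprod \<phi> (u @ v) = tmul (wordprod \<phi> u) (wordprod \<phi> v)"
  by (induction u) (simp_all add: assms tmul_assoc)

lemma tens_hom_tmul:
  assumes \<phi>: "\<And>b. finsupp (\<phi> b)" and x: "finsupp x" and y: "finsupp y"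
  shows "tens_hom \<phi> (tmul x y) = tmul (tens_hom \<phi> x) (tens_hom \<phi> y)"
  using x
proof (induction x rule: finsupp_induct)
  case (word u)
  show ?case using y
    by (induction y rule: finsupp_induct)
       (simp_all add: \<phi> tmul_tadd_right tmul_tsmult_right tens_hom_tadd tens_hom_tsmult
          tmul_word_word wordprod_append)
qed (simp_all add: \<phi> y tmul_tadd_left tmul_tsmult_left tens_hom_tadd tens_hom_tsmult)

lemma deg1_tens_hom:
  assumes "\<And>b. deg1 (\<phi> b)" "deg1 x"
  shows "deg1 (tens_hom \<phi> x)"
  using assms(2)
  by (induction x rule: deg1_induct) (simp_all add: assms(1) deg1_finsupp tens_hom_tadd
      tens_hom_tsmult)

abbreviation tcomm :: "('b, 'k::comm_ring_1) tens \<Rightarrow> ('b, 'k) tens \<Rightarrow> ('b, 'k) tens" where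
  "tcomm x y \<equiv> tsub (tmul x y) (tmul y x)"

lemma br_lin_eq_lin_gens: "br_lin B x y = lin_gens (\<lambda>c. lin_gens (B c) y) x"
  by (auto simp: br_lin_def lin_gens_def supp1_def sum_distrib_left mult.assoc)

lemma br_lin_gen_gen [simp]: "br_lin B (gen a) (gen b) = B a b"
  by (simp add: br_lin_eq_lin_gens)

lemma br_lin_tzero_left [simp]: "br_lin B tzero z = tzero"
  by (simp add: br_lin_eq_lin_gens)

lemma br_lin_tzero_right [simp]: "br_lin B z tzero = tzero"
  by (simp add: br_lin_eq_lin_gens)

lemma lin_on_br_lin_left: "lin_on deg1 (\<lambda>x. br_lin B x z)"
  by (simp add: br_lin_eq_lin_gens lin_on_lin_gens)

lemma lin_on_br_lin_right: "lin_on deg1 (br_lin B z)"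
  by (intro lin_onI) (simp_all add: br_lin_eq_lin_gens lin_gens_tadd lin_gens_tsmult
      lin_gens_fun_tadd lin_gens_fun_tsmult)

lemmas br_lin_tadd_left = lin_on_tadd[OF lin_on_br_lin_left]
lemmas br_lin_tsmult_left = lin_on_tsmult[OF lin_on_br_lin_left]
lemmas br_lin_tadd_right = lin_on_tadd[OF lin_on_br_lin_right]
lemmas br_lin_tsmult_right = lin_on_tsmult[OF lin_on_br_lin_right]

lemma br_lin_tsub_left: "deg1 x \<Longrightarrow> deg1 y \<Longrightarrow> br_lin B (tsub x y) z = tsub (br_lin B x z) (br_lin B y z)"
  by (simp add: lin_on_tsub[OF lin_on_br_lin_left])

lemma br_lin_tsub_right: "deg1 x \<Longrightarrow> deg1 y \<Longrightarrow> br_lin B z (tsub x y) = tsub (br_lin B z x) (br_lin B z y)"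
  by (simp add: lin_on_tsub[OF lin_on_br_lin_right])

lemmas br_lin_linear = br_lin_tadd_left br_lin_tadd_right br_lin_tsmult_left br_lin_tsmult_right
  if_distrib[of "br_lin B x" for B x] if_distrib[of "\<lambda>x. br_lin B x z" for B z]

lemma deg1_br_lin: "(\<And>a b. deg1 (B a b)) \<Longrightarrow> deg1 x \<Longrightarrow> deg1 y \<Longrightarrow> deg1 (br_lin B x y)"
  by (simp add: br_lin_eq_lin_gens)

lemma br_lin_antisym:
  assumes B: "\<And>a b. B a b = tsmult (-1) (B b a)" and "deg1 x" "deg1 y"
  shows "br_lin B x y = tsmult (-1) (br_lin B y x)"
  using assms(2,3)
proof (induction x rule: deg1_induct)
  case (gen a)
  then show ?case
  proof (induction y rule: deg1_induct)
    case (gen b)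
    show ?case by (simp only: br_lin_gen_gen) (rule B)
  qed (simp_all add: br_lin_linear tsmult_tadd mult.commute)
qed (simp_all add: br_lin_linear tsmult_tadd mult.commute)

lemma br_lin_jacobi:
  assumes B: "\<And>a b. deg1 (B a b)"
    and J: "\<And>a b c. br_lin B (B a b) (gen c) =
      tadd (br_lin B (B a c) (gen b)) (br_lin B (gen a) (B b c))"
  shows "deg1 x \<Longrightarrow> deg1 y \<Longrightarrow> deg1 z \<Longrightarrow>
    br_lin B (br_lin B x y) z = tadd (br_lin B (br_lin B x z) y) (br_lin B x (br_lin B y z))"
proof (induction x rule: deg1_induct)
  case (gen a)
  then show ?case
  proof (induction y rule: deg1_induct)
    case (gen b)
    then show ?case
    proof (induction z rule: deg1_induct)
      case (gen c)
      show ?case by (simp only: br_lin_gen_gen) (rule J)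
    qed (simp_all add: br_lin_linear deg1_br_lin B, (simp_all add: tens_pointwise algebra_simps)?)
  qed (simp_all add: br_lin_linear deg1_br_lin B, (simp_all add: tens_pointwise algebra_simps)?)
qed (simp_all add: br_lin_linear deg1_br_lin B, (simp_all add: tens_pointwise algebra_simps)?)

lemma commutator_rel_bilinear:
  assumes B: "\<And>a b. deg1 (B a b)" and K: "is_lideal K"
    and gens: "\<And>a b. tsub (tcomm (gen a) (gen b)) (B a b) \<in> K"
    and x: "deg1 x" and y: "deg1 y"
  shows "tsub (tcomm x y) (br_lin B x y) \<in> K"
proof -
  have lin_left: "lin_on deg1 (\<lambda>x. tsub (tcomm x y) (br_lin B x y))" if "deg1 y" for y
    using that
    by (intro lin_onI)
       (simp_all add: tmul_tadd_left tmul_tadd_right tmul_tsmult_left tmul_tsmult_right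
           br_lin_linear
          deg1_finsupp, (simp_all add: tens_pointwise algebra_simps)?)
  have lin_right: "lin_on deg1 (\<lambda>y. tsub (tcomm x y) (br_lin B x y))" if "deg1 x" for x
    using that
    by (intro lin_onI)
       (simp_all add: tmul_tadd_left tmul_tadd_right tmul_tsmult_left tmul_tsmult_right
           br_lin_linear
          deg1_finsupp, (simp_all add: tens_pointwise algebra_simps)?)
  have "tsub (tcomm (gen a) y) (br_lin B (gen a) y) \<in> K" for a
    using lin_on_deg1_mem[OF lin_right K _ y] gens by simp
  then show ?thesis
    using lin_on_deg1_mem[OF lin_left[OF y] K _ x] by simp
qed

section \<open>The bracket of \<open>bms\<close>\<close>

abbreviation bms_bracket :: "(bms, 'k::field_char_0) tens \<Rightarrow> (bms, 'k) tens \<Rightarrow> (bms, 'k) tens" where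
  "bms_bracket \<equiv> br_lin bms_br"

lemma deg1_bms_br [simp]: "deg1 (bms_br a b)"
  by (cases a; cases b) (simp_all add: bms_br_def)

lemma deg1_bms_bracket [simp]: "deg1 f \<Longrightarrow> deg1 g \<Longrightarrow> deg1 (bms_bracket f g)"
  by (simp add: deg1_br_lin)

lemma bms_br_antisym: "bms_br a b = tsmult (-1) (bms_br b a :: (bms, 'k::field_char_0) tens)"
proof (cases a; cases b)
  fix n m assume [simp]: "a = L n" "b = L m"
  show ?thesis
    by (auto simp: bms_br_def fun_eq_iff tadd_def tsmult_def tzero_def gen_def word_def
        add.commute power2_eq_square algebra_simps) (simp add: add_divide_distrib[symmetric])
qed (auto simp: bms_br_def fun_eq_iff tadd_def tsmult_def tzero_def add.commute)

lemma int_add_eq_uminus_iff: "(a::int) + b = - c \<longleftrightarrow> c = - a - b"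
  by auto

lemma int_mult_2_eq_uminus_iff: "(a::int) * 2 = - c \<longleftrightarrow> c = - 2 * a"
  by auto

lemma bms_br_jacobi:
  "bms_bracket (bms_br a b) (gen c) =
     tadd (bms_bracket (bms_br a c) (gen b))
       (bms_bracket (gen a) (bms_br b c) :: (bms, 'k::field_char_0) tens)"
  apply (cases a; cases b; cases c)
  apply (simp_all add: bms_br_def br_lin_linear)
  apply (simp_all add: bms_br_def fun_eq_iff tadd_def tsmult_def tzero_def gen_def word_def add_ac)
  apply (auto simp: algebra_simps power2_eq_square)
  apply (simp_all add: int_add_eq_uminus_iff int_mult_2_eq_uminus_iff)
  apply (simp_all add: field_simps power2_eq_square)
  done

lemma bms_bracket_antisym: "deg1 f \<Longrightarrow> deg1 g \<Longrightarrow> bms_bracket f g = tsmult (-1) (bms_bracket g f)"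
  by (rule br_lin_antisym[OF bms_br_antisym])

lemma bms_bracket_jacobi:
  "deg1 f \<Longrightarrow> deg1 g \<Longrightarrow> deg1 h \<Longrightarrow>
    bms_bracket (bms_bracket f g) h =
      tadd (bms_bracket (bms_bracket f h) g) (bms_bracket f (bms_bracket g h))"
  by (rule br_lin_jacobi[OF deg1_bms_br bms_br_jacobi])

lemma bms_br_CM [simp]: "bms_br b CM = tzero"
  by (cases b) (simp_all add: bms_br_def)

lemma bms_bracket_CM [simp]: "bms_bracket x (gen CM) = tzero"
  by (simp add: br_lin_eq_lin_gens)

lemma bms_rel_deg1: "deg1 x \<Longrightarrow> deg1 y \<Longrightarrow> tsub (tcomm x y) (bms_bracket x y) \<in> ideal_gen bms_rel"
  by (rule commutator_rel_bilinear[OF deg1_bms_br is_lideal_ideal_gen])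
     (auto simp: bms_rel_def intro: ideal_gen.base)

section \<open>The subalgebra \<open>bhat\<close>\<close>

text \<open>\<open>bhat_O k\<close> and \<open>bhat_P k\<close> are \<open>O\<^sub>k = L\<^sub>k - L\<^sub>-\<^sub>k\<close> and \<open>P\<^sub>k = M\<^sub>k + M\<^sub>-\<^sub>k\<close> for an arbitrary
  integer \<open>k\<close>, so that \<open>O\<^sub>-\<^sub>k = -O\<^sub>k\<close>, \<open>O\<^sub>0 = 0\<close> and \<open>P\<^sub>-\<^sub>k = P\<^sub>k\<close>.\<close>

definition bhat_O :: "int \<Rightarrow> (bhat, 'k::field_char_0) tens" where
  "bhat_O k = (if k > 0 then gen (Ob (nat k - 1))
     else if k < 0 then tsmult (-1) (gen (Ob (nat (-k) - 1))) else tzero)"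

definition bhat_P :: "int \<Rightarrow> (bhat, 'k::field_char_0) tens" where
  "bhat_P k = gen (Pb (nat \<bar>k\<bar>))"

lemma deg1_bhat_O [simp]: "deg1 (bhat_O k)"
  by (simp add: bhat_O_def)

lemma deg1_bhat_P [simp]: "deg1 (bhat_P k)"
  by (simp add: bhat_P_def)

lemma finsupp_bhat_O [simp]: "finsupp (bhat_O k)"
  by (simp add: deg1_finsupp)

lemma finsupp_bhat_P [simp]: "finsupp (bhat_P k)"
  by (simp add: deg1_finsupp)

lemma deg1_bhat_emb [simp]: "deg1 (bhat_emb c)"
  by (cases c) (simp_all add: bhat_emb_def)

lemma finsupp_bhat_emb [simp]: "finsupp (bhat_emb c)"
  by (simp add: deg1_finsupp)

abbreviation emb :: "(bhat, 'k::field_char_0) tens \<Rightarrow> (bms, 'k) tens" where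
  "emb \<equiv> tens_hom bhat_emb"

lemma emb_simps:
  "finsupp x \<Longrightarrow> finsupp y \<Longrightarrow> emb (tadd x y) = tadd (emb x) (emb y)"
  "finsupp x \<Longrightarrow> finsupp y \<Longrightarrow> emb (tsub x y) = tsub (emb x) (emb y)"
  "finsupp x \<Longrightarrow> emb (tsmult c x) = tsmult c (emb x)"
  "emb (if P then x else y) = (if P then emb x else emb y)"
  by (simp_all add: tens_hom_tadd tens_hom_tsub tens_hom_tsmult)

lemma emb_gen [simp]: "emb (gen c) = bhat_emb c"
  by simp

lemma deg1_emb [simp]: "deg1 x \<Longrightarrow> deg1 (emb x)"
  by (rule deg1_tens_hom) simp_all

lemma emb_bhat_O: "emb (bhat_O k) = tsub (gen (L k)) (gen (L (-k)))"
proof (cases "k > 0")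
  case True
  then show ?thesis by (simp add: bhat_O_def bhat_emb_def)
next
  case False
  show ?thesis
  proof (cases "k < 0")
    case True
    then have "emb (bhat_O k) = tsmult (-1) (bhat_emb (Ob (nat (-k) - 1)))"
      by (simp add: bhat_O_def tens_hom_tsmult)
    also have "\<dots> = tsub (gen (L k)) (gen (L (-k)))"
      using True by (auto simp: bhat_emb_def tens_pointwise)
    finally show ?thesis .
  next
    case False
    with \<open>\<not> k > 0\<close> show ?thesis by (simp add: bhat_O_def)
  qed
qed

lemma emb_bhat_P: "emb (bhat_P k) = tadd (gen (M k)) (gen (M (-k)))"
  by (auto simp: bhat_P_def bhat_emb_def fun_eq_iff tadd_def abs_if)

definition bhat_br :: "bhat \<Rightarrow> bhat \<Rightarrow> (bhat, 'k::field_char_0) tens" where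
  "bhat_br c d = (case (c, d) of
     (Ob i, Ob j) \<Rightarrow> tsub (tsmult (of_int (int i - int j)) (bhat_O (int i + int j + 2)))
                         (tsmult (of_int (int i + int j + 2)) (bhat_O (int i - int j)))
   | (Ob i, Pb j) \<Rightarrow> tadd (tadd (tsmult (of_int (int i + 1 - int j)) (bhat_P (int i + 1 + int j)))
                               (tsmult (of_int (int i + 1 + int j)) (bhat_P (int i + 1 - int j))))
                         (if int j = int i + 1
                          then tsmult (of_int ((int i + 1) * ((int i + 1)^2 - 1)) / 6) (gen CMb)
                          else tzero)
   | (Pb j, Ob i) \<Rightarrow> tsmult (-1)
                        (tadd (tadd (tsmult (of_int (int i + 1 - int j)) (bhat_P (int i + 1 + int j)))
                               (tsmult (of_int (int i + 1 + int j)) (bhat_P (int i + 1 - int j))))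
                         (if int j = int i + 1
                          then tsmult (of_int ((int i + 1) * ((int i + 1)^2 - 1)) / 6) (gen CMb)
                          else tzero))
   | _ \<Rightarrow> tzero)"

lemma deg1_bhat_br [simp]: "deg1 (bhat_br c d)"
  by (cases c; cases d) (simp_all add: bhat_br_def)

lemma int_eq_Suc_iff: "int a = 1 + int b \<longleftrightarrow> a = Suc b" "int a = int b + 1 \<longleftrightarrow> a = Suc b"
  by auto

lemma emb_bhat_br: "emb (bhat_br c d) = bms_bracket (bhat_emb c) (bhat_emb d)"
  apply (cases c; cases d)
  apply (simp_all add: bhat_br_def emb_simps)
  apply (simp_all add: emb_bhat_O emb_bhat_P bhat_emb_def br_lin_linear br_lin_tsub_left
      br_lin_tsub_right)
  apply (simp_all add: bms_br_def fun_eq_iff tadd_def tsub_def tsmult_def tzero_def gen_def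
      word_def add_ac)
  apply (auto simp: algebra_simps power2_eq_square int_eq_Suc_iff)
  apply (simp_all add: field_simps power2_eq_square)
  done

abbreviation bhat_bracket :: "(bhat, 'k::field_char_0) tens \<Rightarrow> (bhat, 'k) tens \<Rightarrow> (bhat, 'k) tens" where
  "bhat_bracket \<equiv> br_lin bhat_br"

lemma deg1_bhat_bracket [simp]: "deg1 x \<Longrightarrow> deg1 y \<Longrightarrow> deg1 (bhat_bracket x y)"
  by (simp add: deg1_br_lin)

lemma emb_bhat_bracket: "deg1 x \<Longrightarrow> deg1 y \<Longrightarrow> emb (bhat_bracket x y) = bms_bracket (emb x) (emb y)"
proof (induction x rule: deg1_induct)
  case (gen a)
  then show ?case
    by (induction y rule: deg1_induct) (simp_all add: br_lin_linear emb_simps deg1_finsupp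
        emb_bhat_br)
qed (simp_all add: br_lin_linear emb_simps deg1_finsupp)

lemma bhat_rel_deg1: "deg1 x \<Longrightarrow> deg1 y \<Longrightarrow> tsub (tcomm x y) (bhat_bracket x y) \<in> ideal_gen bhat_rel"
  by (rule commutator_rel_bilinear[OF deg1_bhat_br is_lideal_ideal_gen])
     (rule ideal_gen.base, unfold bhat_rel_def, blast intro: emb_bhat_br deg1_bhat_br)

section \<open>A \<open>bms\<close>-action on \<open>T(bhat)\<close>\<close>

locale verma_weights =
  fixes hL hM cL cM :: "'k::field_char_0"
begin

abbreviation "I1 \<equiv> ideal_gen (bhat_rel :: (bhat, 'k) tens set)"
abbreviation "K1 \<equiv> quot_ideal hM cM"
abbreviation "I2 \<equiv> ideal_gen (bms_rel :: (bms, 'k) tens set)"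
abbreviation "K2 \<equiv> verma_ideal hL hM cL cM"

text \<open>\<open>vac b\<close> represents \<open>b \<cdot> 1\<close>: for \<open>n > 0\<close> one has \<open>L\<^sub>-\<^sub>n = O\<^sub>-\<^sub>n + L\<^sub>n\<close> and
  \<open>M\<^sub>-\<^sub>n = P\<^sub>n - M\<^sub>n\<close>, where \<open>L\<^sub>n\<close> and \<open>M\<^sub>n\<close> kill the highest weight vector, and the remaining
  basis elements act on it by their weights.\<close>

definition vac :: "bms \<Rightarrow> (bhat, 'k) tens" where
  "vac b = (case b of
     L n \<Rightarrow> (if n = 0 then tsmult hL tone else if n < 0 then bhat_O n else tzero)
   | M n \<Rightarrow> (if n = 0 then tsmult hM tone else if n < 0 then bhat_P n else tzero)
   | CL \<Rightarrow> tsmult cL tone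
   | CM \<Rightarrow> tsmult cM tone)"

lemma finsupp_vac [simp]: "finsupp (vac b)"
  by (cases b) (simp_all add: vac_def)

text \<open>The action of \<open>b\<close> on a word is computed by commuting \<open>b\<close> to the right:
  \<open>b \<cdot> (c y) = c (b \<cdot> y) + [b, c] \<cdot> y\<close>.\<close>

primrec gen_act_words :: "bhat list \<Rightarrow> bms \<Rightarrow> (bhat, 'k) tens" where
  "gen_act_words [] = vac"
| "gen_act_words (c # w) =
     (\<lambda>b. tadd (tmul (gen c) (gen_act_words w b))
        (lin_gens (gen_act_words w) (bms_bracket (gen b) (bhat_emb c))))"

lemma finsupp_gen_act_words [simp]: "finsupp (gen_act_words w b)"
  by (induction w arbitrary: b) simp_all

definition gen_act :: "bms \<Rightarrow> (bhat, 'k) tens \<Rightarrow> (bhat, 'k) tens" where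
  "gen_act b = lin_words (\<lambda>w. gen_act_words w b)"

definition deg1_act :: "(bms, 'k) tens \<Rightarrow> (bhat, 'k) tens \<Rightarrow> (bhat, 'k) tens" where
  "deg1_act f y = lin_gens (\<lambda>b. gen_act b y) f"

lemma gen_act_word [simp]: "gen_act b (word w) = gen_act_words w b"
  by (simp add: gen_act_def)

lemma gen_act_tzero [simp]: "gen_act b tzero = tzero"
  by (simp add: gen_act_def)

lemma gen_act_tone [simp]: "gen_act b tone = vac b"
  by (simp add: tone_def)

lemma finsupp_gen_act [simp]: "finsupp y \<Longrightarrow> finsupp (gen_act b y)"
  by (simp add: gen_act_def)

lemma lin_on_gen_act: "lin_on finsupp (gen_act b)"
  by (simp add: gen_act_def lin_on_lin_words)

lemma lin_on_deg1_act_left: "lin_on deg1 (\<lambda>f. deg1_act f y)"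
  by (simp add: deg1_act_def lin_on_lin_gens)

lemma lin_on_deg1_act: "lin_on finsupp (deg1_act f)"
  by (intro lin_onI) (simp_all add: deg1_act_def lin_on_tadd[OF lin_on_gen_act]
      lin_on_tsmult[OF lin_on_gen_act] lin_gens_fun_tadd lin_gens_fun_tsmult)

lemmas deg1_act_tadd_left = lin_on_tadd[OF lin_on_deg1_act_left]
lemmas deg1_act_tsmult_left = lin_on_tsmult[OF lin_on_deg1_act_left]
lemmas deg1_act_tadd_right = lin_on_tadd[OF lin_on_deg1_act]
lemmas deg1_act_tsmult_right = lin_on_tsmult[OF lin_on_deg1_act]

lemma deg1_act_tsub_right:
  "finsupp x \<Longrightarrow> finsupp y \<Longrightarrow> deg1_act f (tsub x y) = tsub (deg1_act f x) (deg1_act f y)"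
  by (simp add: lin_on_tsub[OF lin_on_deg1_act])

lemma deg1_act_tzero_left [simp]: "deg1_act tzero y = tzero"
  by (simp add: deg1_act_def)

lemma deg1_act_tzero_right [simp]: "deg1_act f tzero = tzero"
  by (simp add: lin_on_tzero[OF lin_on_deg1_act])

lemma finsupp_deg1_act [simp]: "deg1 f \<Longrightarrow> finsupp y \<Longrightarrow> finsupp (deg1_act f y)"
  by (simp add: deg1_act_def)

lemma deg1_act_gen [simp]: "deg1_act (gen b) y = gen_act b y"
  by (simp add: deg1_act_def)

lemma deg1_act_tone: "deg1_act f tone = lin_gens vac f"
  by (simp add: deg1_act_def)

lemma gen_act_tmul_gen:
  assumes "finsupp y"
  shows "gen_act b (tmul (gen c) y) =
    tadd (tmul (gen c) (gen_act b y)) (deg1_act (bms_bracket (gen b) (bhat_emb c)) y)"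
  using assms
proof (induction y rule: finsupp_induct)
  case (word u)
  then show ?case by (simp add: tmul_gen_word deg1_act_def)
qed (simp_all add: tmul_tadd_right tmul_tsmult_right lin_on_tadd[OF lin_on_gen_act]
    lin_on_tsmult[OF lin_on_gen_act] deg1_act_tadd_right deg1_act_tsmult_right,
    simp_all add: tens_pointwise algebra_simps)

lemma deg1_act_tmul_gen:
  assumes "deg1 f" "finsupp y"
  shows "deg1_act f (tmul (gen c) y) =
    tadd (tmul (gen c) (deg1_act f y)) (deg1_act (bms_bracket f (bhat_emb c)) y)"
  using assms
proof (induction f rule: deg1_induct)
  case (gen b)
  then show ?case using gen_act_tmul_gen by simp
qed (simp_all add: deg1_act_tadd_left deg1_act_tsmult_left br_lin_linear tmul_tadd_right tmul_tsmult_right,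
    simp_all add: tens_pointwise algebra_simps)

lemma deg1_act_tmul_deg1:
  assumes "deg1 f" "deg1 g" "finsupp y"
  shows "deg1_act f (tmul g y) = tadd (tmul g (deg1_act f y)) (deg1_act (bms_bracket f (emb g)) y)"
  using assms(2,1,3)
proof (induction g rule: deg1_induct)
  case (gen c)
  then show ?case using deg1_act_tmul_gen by simp
qed (simp_all add: tmul_tadd_left tmul_tsmult_left deg1_act_tadd_right deg1_act_tsmult_right
    deg1_act_tadd_left deg1_act_tsmult_left emb_simps deg1_finsupp br_lin_linear,
    simp_all add: tens_pointwise algebra_simps)

lemma deg1_act_tmul_mem:
  assumes K: "is_lideal K" and z: "finsupp z" and hz: "\<And>f. deg1 f \<Longrightarrow> deg1_act f z \<in> K"
    and "finsupp a" "deg1 f"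
  shows "deg1_act f (tmul a z) \<in> K"
proof -
  have words: "deg1_act f (tmul (word u) z) \<in> K" if "deg1 f" for f u
    using that
  proof (induction u arbitrary: f)
    case Nil
    with hz z show ?case by (simp add: tone_def[symmetric])
  next
    case (Cons c u)
    have "tmul (word (c # u)) z = tmul (gen c) (tmul (word u) z)"
      using z by (simp add: tmul_assoc[symmetric] tmul_gen_word)
    with Cons z show ?case by (simp add: deg1_act_tmul_gen lideal_tadd[OF K] lideal_tmul[OF K])
  qed
  have "lin_on finsupp (\<lambda>a. deg1_act f (tmul a z))"
    using z by (intro lin_onI) (simp_all add: tmul_tadd_left tmul_tsmult_left deg1_act_tadd_right
        deg1_act_tsmult_right)
  from lin_on_finsupp_mem[OF this K words[OF \<open>deg1 f\<close>] \<open>finsupp a\<close>] show ?thesis .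
qed

lemma finsupp_bhat_rel: "r \<in> bhat_rel \<Longrightarrow> finsupp r"
  by (auto simp: bhat_rel_def deg1_finsupp)

lemma I1_finsupp: "x \<in> I1 \<Longrightarrow> finsupp x"
  by (erule ideal_gen_finsupp) (rule finsupp_bhat_rel)

text \<open>This is where the Jacobi identity of \<open>bms\<close> enters.\<close>

lemma deg1_act_tmul_rel:
  assumes r: "r \<in> bhat_rel" and f: "deg1 f" and y: "finsupp y"
  shows "deg1_act f (tmul r y) = tmul r (deg1_act f y)"
proof -
  obtain c d \<beta> where r_eq: "r = tsub (tcomm (gen c) (gen d)) \<beta>"
    and \<beta>: "deg1 \<beta>" and emb_\<beta>: "emb \<beta> = bms_bracket (bhat_emb c) (bhat_emb d)"
    using r unfolding bhat_rel_def by blast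
  let ?ec = "bhat_emb c" and ?ed = "bhat_emb d"
  have J: "bms_bracket (bms_bracket f ?ec) ?ed =
      tadd (bms_bracket (bms_bracket f ?ed) ?ec) (bms_bracket f (bms_bracket ?ec ?ed))"
    by (rule bms_bracket_jacobi) (simp_all add: f)
  have "finsupp \<beta>" using \<beta> by (simp add: deg1_finsupp)
  have r_mul: "tmul r z =
      tsub (tsub (tmul (gen c) (tmul (gen d) z)) (tmul (gen d) (tmul (gen c) z))) (tmul \<beta> z)"
    if "finsupp z" for z
    unfolding r_eq using that \<open>finsupp \<beta>\<close> by (simp add: tmul_tsub_left tmul_assoc)
  show ?thesis
    unfolding r_mul[OF y] r_mul[OF finsupp_deg1_act[OF f y]] using f y \<open>finsupp \<beta>\<close> \<beta>
    by (simp add: deg1_act_tsub_right deg1_act_tmul_gen deg1_act_tmul_deg1 deg1_act_tadd_right J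
        emb_\<beta>
        deg1_act_tadd_left tmul_tadd_right)
       (simp add: tens_pointwise algebra_simps)
qed

lemma deg1_act_tmul_I1:
  assumes "x \<in> I1"
  shows "deg1 f \<Longrightarrow> finsupp y \<Longrightarrow> deg1_act f (tmul x y) \<in> I1"
  using assms
proof (induction x arbitrary: f y rule: ideal_gen.induct)
  case zero
  then show ?case by (simp add: ideal_gen.zero)
next
  case (base s)
  then show ?case by (simp add: deg1_act_tmul_rel ideal_gen.rmult ideal_gen.base)
next
  case (add x1 x2)
  then have "finsupp x1" "finsupp x2" using I1_finsupp by blast+
  with add show ?case by (simp add: tmul_tadd_left deg1_act_tadd_right ideal_gen.add)
next
  case (smult x c)
  then have "finsupp x" using I1_finsupp by blast
  with smult show ?case by (simp add: tmul_tsmult_left deg1_act_tsmult_right ideal_gen.smult)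
next
  case (lmult x a)
  then have "finsupp x" using I1_finsupp by blast
  with lmult have "deg1_act f (tmul a (tmul x y)) \<in> I1"
    by (rule_tac deg1_act_tmul_mem[OF is_lideal_ideal_gen]) simp_all
  with \<open>finsupp x\<close> lmult show ?case by (simp add: tmul_assoc)
next
  case (rmult x a)
  then have "finsupp x" using I1_finsupp by blast
  with rmult show ?case using rmult.IH[of f "tmul a y"] by (simp add: tmul_assoc)
qed

lemma deg1_act_I1: "x \<in> I1 \<Longrightarrow> deg1 f \<Longrightarrow> deg1_act f x \<in> I1"
  using deg1_act_tmul_I1[of x f tone] I1_finsupp[of x] by simp


definition act_defect :: "(bms, 'k) tens \<Rightarrow> (bms, 'k) tens \<Rightarrow> (bhat, 'k) tens \<Rightarrow> (bhat, 'k) tens" where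
  "act_defect f g y =
     tsub (tsub (deg1_act f (deg1_act g y)) (deg1_act g (deg1_act f y))) (deg1_act (bms_bracket f g) y)"

lemma lin_on_act_defect: "deg1 f \<Longrightarrow> deg1 g \<Longrightarrow> lin_on finsupp (act_defect f g)"
  by (intro lin_onI) (simp_all add: act_defect_def deg1_act_tadd_right deg1_act_tsmult_right,
      simp_all add: tens_pointwise algebra_simps)

lemma lin_on_act_defect_left: "deg1 g \<Longrightarrow> finsupp y \<Longrightarrow> lin_on deg1 (\<lambda>f. act_defect f g y)"
  by (intro lin_onI) (simp_all add: act_defect_def deg1_act_tadd_right deg1_act_tsmult_right
      deg1_act_tadd_left deg1_act_tsmult_left br_lin_linear, simp_all add: tens_pointwise algebra_simps)

lemma lin_on_act_defect_right: "deg1 f \<Longrightarrow> finsupp y \<Longrightarrow> lin_on deg1 (\<lambda>g. act_defect f g y)"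
  by (intro lin_onI) (simp_all add: act_defect_def deg1_act_tadd_right deg1_act_tsmult_right
      deg1_act_tadd_left deg1_act_tsmult_left br_lin_linear, simp_all add: tens_pointwise algebra_simps)

lemma act_defect_tmul_gen:
  assumes f: "deg1 f" and g: "deg1 g" and y: "finsupp y"
  shows "act_defect f g (tmul (gen c) y) =
    tadd (tadd (tmul (gen c) (act_defect f g y)) (act_defect (bms_bracket f (bhat_emb c)) g y))
      (act_defect f (bms_bracket g (bhat_emb c)) y)"
proof -
  let ?e = "bhat_emb c"
  have J: "bms_bracket (bms_bracket f g) ?e =
      tadd (bms_bracket (bms_bracket f ?e) g) (bms_bracket f (bms_bracket g ?e))"
    by (rule bms_bracket_jacobi) (simp_all add: f g)
  show ?thesis
    using f g y
    by (simp add: act_defect_def deg1_act_tmul_gen deg1_act_tadd_right deg1_act_tadd_left J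
        tmul_tsub_right)
       (simp add: tens_pointwise algebra_simps)
qed

lemma act_defect_mem:
  assumes K: "is_lideal K" and gens: "\<And>a b. act_defect (gen a) (gen b) tone \<in> K"
    and f: "deg1 f" and g: "deg1 g" and y: "finsupp y"
  shows "act_defect f g y \<in> K"
proof -
  have tone: "act_defect f g tone \<in> K" if "deg1 f" "deg1 g" for f g
  proof -
    have "act_defect (gen a) g tone \<in> K" for a
      using lin_on_deg1_mem[OF lin_on_act_defect_right[OF deg1_gen finsupp_tone] K gens \<open>deg1 g\<close>] .
    then show ?thesis
      using lin_on_deg1_mem[OF lin_on_act_defect_left[OF \<open>deg1 g\<close> finsupp_tone] K _ \<open>deg1 f\<close>] by blast
  qed
  have words: "act_defect f g (word w) \<in> K" if "deg1 f" "deg1 g" for f g w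
    using that
  proof (induction w arbitrary: f g)
    case Nil
    then show ?case using tone by (simp add: tone_def)
  next
    case (Cons c w)
    then show ?case
      by (simp add: tmul_gen_word[symmetric] act_defect_tmul_gen lideal_tadd[OF K] lideal_tmul[OF
          K])
  qed
  show ?thesis
    using lin_on_finsupp_mem[OF lin_on_act_defect[OF f g] K words[OF f g] y] .
qed

lemma is_lideal_K1: "is_lideal K1"
  by (simp add: quot_ideal_def is_lideal_lideal_gen)

lemma I1_K1: "x \<in> I1 \<Longrightarrow> x \<in> K1"
  by (simp add: quot_ideal_def lideal_gen.base)

lemma K1_P0: "tsub (gen (Pb 0)) (tsmult (2 * hM) tone) \<in> K1"
  by (simp add: quot_ideal_def lideal_gen.base)

lemma K1_CM: "tsub (gen CMb) (tsmult cM tone) \<in> K1"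
  by (simp add: quot_ideal_def lideal_gen.base)

lemma K1_finsupp: "x \<in> K1 \<Longrightarrow> finsupp x"
  unfolding quot_ideal_def by (erule lideal_gen_finsupp) (auto simp: I1_finsupp)

lemma bhat_rel_K1: "deg1 x \<Longrightarrow> deg1 y \<Longrightarrow> tsub (tcomm x y) (bhat_bracket x y) \<in> K1"
  by (simp add: I1_K1 bhat_rel_deg1)

definition bhat_part :: "bms \<Rightarrow> (bhat, 'k) tens" where
  "bhat_part b = (case b of
     L n \<Rightarrow> (if n < 0 then bhat_O n else tzero)
   | M n \<Rightarrow> (if n < 0 then bhat_P n else tzero)
   | _ \<Rightarrow> tzero)"

definition plus_part :: "bms \<Rightarrow> (bms, 'k) tens" where
  "plus_part b = (case b of
     L n \<Rightarrow> (if n < 0 then gen (L (- n)) else gen (L n))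
   | M n \<Rightarrow> (if n < 0 then tsmult (-1) (gen (M (- n))) else gen (M n))
   | x \<Rightarrow> gen x)"

definition weight :: "bms \<Rightarrow> 'k" where
  "weight b = (case b of
     L n \<Rightarrow> (if n = 0 then hL else 0)
   | M n \<Rightarrow> (if n = 0 then hM else 0)
   | CL \<Rightarrow> cL
   | CM \<Rightarrow> cM)"

lemma deg1_bhat_part [simp]: "deg1 (bhat_part b)"
  by (cases b) (simp_all add: bhat_part_def)

lemma finsupp_bhat_part [simp]: "finsupp (bhat_part b)"
  by (simp add: deg1_finsupp)

lemma deg1_plus_part [simp]: "deg1 (plus_part b)"
  by (cases b) (simp_all add: plus_part_def)

lemma vac_decomp: "vac b = tadd (bhat_part b) (tsmult (weight b) tone)"
  by (cases b) (auto simp: vac_def bhat_part_def weight_def)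

lemma gen_decomp: "gen b = tadd (emb (bhat_part b)) (plus_part b)"
  by (cases b) (auto simp: bhat_part_def plus_part_def emb_bhat_O emb_bhat_P tens_pointwise
      tzero_apply)

lemma vac_bracket_plus_parts: "lin_gens vac (bms_bracket (plus_part a) (plus_part b)) = tzero"
  by (cases a; cases b)
     (simp_all add: plus_part_def br_lin_linear if_distrib bms_br_def lin_gens_tadd lin_gens_tsmult,
      auto simp: vac_def lin_gens_tadd lin_gens_tsmult)

lemma vac_bracket_plus_part_P0: "lin_gens vac (bms_bracket (plus_part a) (bhat_emb (Pb 0))) = tzero"
  by (cases a)
     (simp_all add: plus_part_def bhat_emb_def br_lin_linear if_distrib bms_br_def lin_gens_tadd
        lin_gens_tsmult, auto simp: vac_def lin_gens_tadd lin_gens_tsmult)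

lemma vac_bracket_plus_part_CM: "lin_gens vac (bms_bracket (plus_part a) (bhat_emb CMb)) = tzero"
  by (simp add: bhat_emb_def)

lemma vac_emb_gen: "tsub (lin_gens vac (bhat_emb c)) (gen c) \<in> K1"
proof (cases c)
  case (Ob j)
  have "nat (1 + int j) = Suc j" by simp
  with Ob have "lin_gens vac (bhat_emb c) = gen c"
    by (simp add: bhat_emb_def lin_gens_tsub) (auto simp: vac_def bhat_O_def tens_pointwise
        tzero_apply)
  then show ?thesis by (simp add: lideal_tzero[OF is_lideal_K1])
next
  case (Pb j)
  show ?thesis
  proof (cases "j = 0")
    case True
    with Pb have "tsub (lin_gens vac (bhat_emb c)) (gen c) =
        tsmult (-1) (tsub (gen (Pb 0)) (tsmult (2 * hM) tone))"
      by (simp add: bhat_emb_def lin_gens_tadd del: minus_zero) (auto simp: vac_def tens_pointwise)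
    then show ?thesis using K1_P0 lideal_tsmult[OF is_lideal_K1] by simp
  next
    case False
    with Pb have "lin_gens vac (bhat_emb c) = gen c"
      by (simp add: bhat_emb_def lin_gens_tadd) (auto simp: vac_def bhat_P_def fun_eq_iff tadd_def
          tzero_apply)
    then show ?thesis by (simp add: lideal_tzero[OF is_lideal_K1])
  qed
next
  case CMb
  then have "tsub (lin_gens vac (bhat_emb c)) (gen c) = tsmult (-1) (tsub (gen CMb) (tsmult cM tone))"
    by (auto simp: bhat_emb_def vac_def tens_pointwise)
  then show ?thesis using K1_CM lideal_tsmult[OF is_lideal_K1] by simp
qed

lemma vac_emb:
  assumes "deg1 \<beta>"
  shows "tsub (lin_gens vac (emb \<beta>)) \<beta> \<in> K1"
proof (rule lin_on_deg1_mem[where F = "\<lambda>\<beta>. tsub (lin_gens vac (emb \<beta>)) \<beta>",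
      OF _ is_lideal_K1 vac_emb_gen[folded emb_gen] assms])
  show "lin_on deg1 (\<lambda>\<beta>. tsub (lin_gens vac (emb \<beta>)) \<beta>)"
    by (intro lin_onI) (simp_all add: emb_simps deg1_finsupp lin_gens_tadd lin_gens_tsmult,
        simp_all add: tens_pointwise algebra_simps)
qed

lemma deg1_act_vac:
  assumes "deg1 f"
  shows "deg1_act f (vac b) = tadd (tadd (tmul (bhat_part b) (lin_gens vac f))
      (lin_gens vac (bms_bracket f (emb (bhat_part b))))) (tsmult (weight b) (lin_gens vac f))"
  using assms deg1_act_tmul_deg1[OF assms deg1_bhat_part finsupp_tone, of b]
  by (simp add: vac_decomp deg1_act_tadd_right deg1_act_tsmult_right deg1_act_tone)

lemma vac_bracket_gens:
  "lin_gens vac (bms_bracket (gen a) (gen b)) =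
     tsub (tsub (lin_gens vac (bms_bracket (gen a) (emb (bhat_part b))))
       (lin_gens vac (bms_bracket (gen b) (emb (bhat_part a)))))
     (lin_gens vac (emb (bhat_bracket (bhat_part a) (bhat_part b))))"
proof -
  let ?ea = "emb (bhat_part a)" and ?eb = "emb (bhat_part b)"
  have "bms_bracket (plus_part b) ?ea = tsmult (-1) (bms_bracket ?ea (plus_part b))"
    by (rule bms_bracket_antisym) simp_all
  moreover have "bms_bracket ?eb ?ea = tsmult (-1) (bms_bracket ?ea ?eb)"
    by (rule bms_bracket_antisym) simp_all
  ultimately have "bms_bracket (gen a) (gen b) =
      tsub (tsub (bms_bracket (gen a) ?eb) (bms_bracket (gen b) ?ea)) (tsub (bms_bracket ?ea ?eb)
        (bms_bracket (plus_part a) (plus_part b)))"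
    by (subst (1 2 3 4) gen_decomp) (simp add: br_lin_linear del: br_lin_gen_gen, simp add:
        tens_pointwise)
  then show ?thesis
    by (simp add: lin_gens_tsub vac_bracket_plus_parts emb_bhat_bracket del: br_lin_gen_gen)
qed

text \<open>After splitting \<open>a\<close> and \<open>b\<close> along \<open>bhat + bms\<^sub>+\<close>, the defect on the vacuum
  reduces to a relation of \<open>U(bhat)\<close>.\<close>


lemma act_defect_gens_tone: "act_defect (gen a) (gen b) tone \<in> K1"
proof -
  let ?ha = "bhat_part a" and ?hb = "bhat_part b"
  have "act_defect (gen a) (gen b) tone =
      tadd (tsmult (-1) (tsub (tcomm ?ha ?hb) (bhat_bracket ?ha ?hb)))
        (tsub (tsub (lin_gens vac (emb (bhat_bracket ?ha ?hb))) (bhat_bracket ?ha ?hb)) tzero)"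
    using deg1_act_vac[OF deg1_gen, of a b] deg1_act_vac[OF deg1_gen, of b a]
    unfolding act_defect_def deg1_act_tone lin_gens_gen vac_bracket_gens
    by (simp add: vac_decomp tmul_tadd_right tmul_tsmult_right del: br_lin_gen_gen)
       (simp add: tens_pointwise algebra_simps)
  moreover have "tsub (tcomm ?ha ?hb) (bhat_bracket ?ha ?hb) \<in> K1"
    by (simp add: bhat_rel_K1)
  moreover have "tsub (lin_gens vac (emb (bhat_bracket ?ha ?hb))) (bhat_bracket ?ha ?hb) \<in> K1"
    by (simp add: vac_emb)
  ultimately show ?thesis
    using lideal_tadd[OF is_lideal_K1] lideal_tsmult[OF is_lideal_K1] by simp
qed

lemma deg1_act_gen_tone:
  "deg1 f \<Longrightarrow>
    deg1_act f (gen c) = tadd (tmul (gen c) (lin_gens vac f)) (lin_gens vac (bms_bracket f (bhat_emb c)))"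
  using deg1_act_tmul_gen[of f tone c] by (simp add: deg1_act_tone)

lemma gen_act_scalar_rel:
  assumes rel: "tsub (gen c) (tsmult s tone) \<in> K1"
    and plus: "lin_gens vac (bms_bracket (plus_part b) (bhat_emb c)) = tzero"
  shows "gen_act b (tsub (gen c) (tsmult s tone)) \<in> K1"
proof -
  let ?h = "bhat_part b" and ?r = "tsub (gen c) (tsmult s tone)"
  have "bms_bracket (gen b) (bhat_emb c) =
      tadd (emb (bhat_bracket ?h (gen c))) (bms_bracket (plus_part b) (bhat_emb c))"
    by (subst gen_decomp) (simp add: br_lin_tadd_left emb_bhat_bracket)
  then have "lin_gens vac (bms_bracket (gen b) (bhat_emb c)) =
      lin_gens vac (emb (bhat_bracket ?h (gen c)))"
    by (simp add: lin_gens_tadd plus)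
  then have "gen_act b ?r =
      tadd (tadd (tadd (tsmult (-1) (tsub (tcomm ?h (gen c)) (bhat_bracket ?h (gen c)))) (tmul ?h ?r))
        (tsub (lin_gens vac (emb (bhat_bracket ?h (gen c)))) (bhat_bracket ?h (gen c))))
      (tsmult (weight b) ?r)"
    using deg1_act_gen_tone[OF deg1_gen, of b c]
    by (simp add: lin_on_tsub[OF lin_on_gen_act] lin_on_tsmult[OF lin_on_gen_act] vac_decomp
        tmul_tadd_right tmul_tsmult_right tmul_tsub_right del: br_lin_gen_gen)
       (simp add: tens_pointwise algebra_simps)
  moreover have "tmul ?h ?r \<in> K1"
    by (simp add: lideal_tmul[OF is_lideal_K1 rel])
  ultimately show ?thesis
    using rel bhat_rel_K1 vac_emb lideal_tadd[OF is_lideal_K1] lideal_tsmult[OF is_lideal_K1] by simp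
qed

lemma deg1_act_K1:
  assumes "x \<in> K1" "deg1 f"
  shows "deg1_act f x \<in> K1"
  using assms(1)[unfolded quot_ideal_def] assms(2)
proof (induction x arbitrary: f rule: lideal_gen.induct)
  case zero
  then show ?case by (simp add: lideal_tzero[OF is_lideal_K1])
next
  case (base s)
  then consider "s \<in> I1" | "s = tsub (gen (Pb 0)) (tsmult (2 * hM) tone)"
    | "s = tsub (gen CMb) (tsmult cM tone)"
    by blast
  then show ?case
  proof cases
    case 1
    then show ?thesis using base by (simp add: deg1_act_I1 I1_K1)
  next
    case 2
    then show ?thesis
      using lin_on_deg1_mem[OF lin_on_deg1_act_left is_lideal_K1 _ \<open>deg1 f\<close>]
        gen_act_scalar_rel[OF K1_P0 vac_bracket_plus_part_P0] by simp
  next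
    case 3
    then show ?thesis
      using lin_on_deg1_mem[OF lin_on_deg1_act_left is_lideal_K1 _ \<open>deg1 f\<close>]
        gen_act_scalar_rel[OF K1_CM vac_bracket_plus_part_CM] by simp
  qed
next
  case (add x y)
  then have "finsupp x" "finsupp y" using K1_finsupp by (auto simp: quot_ideal_def)
  with add show ?case by (simp add: deg1_act_tadd_right lideal_tadd[OF is_lideal_K1])
next
  case (smult x c)
  then have "finsupp x" using K1_finsupp by (auto simp: quot_ideal_def)
  with smult show ?case by (simp add: deg1_act_tsmult_right lideal_tsmult[OF is_lideal_K1])
next
  case (lmult x a)
  then have "finsupp x" using K1_finsupp by (auto simp: quot_ideal_def)
  with lmult show ?case by (rule_tac deg1_act_tmul_mem[OF is_lideal_K1]) simp_all
qed


primrec word_act :: "bms list \<Rightarrow> (bhat, 'k) tens \<Rightarrow> (bhat, 'k) tens" where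
  "word_act [] y = y"
| "word_act (b # w) y = gen_act b (word_act w y)"

lemma finsupp_word_act [simp]: "finsupp y \<Longrightarrow> finsupp (word_act w y)"
  by (induction w) simp_all

lemma lin_on_word_act: "lin_on finsupp (word_act w)"
  by (induction w)
     (simp_all add: lin_on_def lin_on_tadd[OF lin_on_gen_act] lin_on_tsmult[OF lin_on_gen_act])

lemma word_act_append: "word_act (u @ v) y = word_act u (word_act v y)"
  by (induction u) simp_all

lemma word_act_K1: "y \<in> K1 \<Longrightarrow> word_act w y \<in> K1"
  by (induction w) (use deg1_act_K1[OF _ deg1_gen] in auto)

definition act :: "(bms, 'k) tens \<Rightarrow> (bhat, 'k) tens \<Rightarrow> (bhat, 'k) tens" where
  "act x y = lin_words (\<lambda>w. word_act w y) x"

lemma act_word [simp]: "act (word w) y = word_act w y"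
  by (simp add: act_def)

lemma act_tzero_left [simp]: "act tzero y = tzero"
  by (simp add: act_def)

lemma act_tone [simp]: "act tone y = y"
  by (simp add: tone_def)

lemma act_gen [simp]: "act (gen b) y = gen_act b y"
  by (simp add: gen_def)

lemma finsupp_act [simp]: "finsupp x \<Longrightarrow> finsupp y \<Longrightarrow> finsupp (act x y)"
  by (simp add: act_def)

lemma lin_on_act_left: "lin_on finsupp (\<lambda>x. act x y)"
  by (simp add: act_def lin_on_lin_words)

lemmas act_tadd_left = lin_on_tadd[OF lin_on_act_left]
lemmas act_tsmult_left = lin_on_tsmult[OF lin_on_act_left]

lemma act_tsub_left: "finsupp x \<Longrightarrow> finsupp x' \<Longrightarrow> act (tsub x x') y = tsub (act x y) (act x' y)"
  by (simp add: lin_on_tsub[OF lin_on_act_left])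

lemma act_tmul:
  assumes x: "finsupp x" and x': "finsupp x'" and y: "finsupp y"
  shows "act (tmul x x') y = act x (act x' y)"
  using x
proof (induction x rule: finsupp_induct)
  case (word u)
  show ?case
  proof (rule lin_on_finsupp_eq[OF _ _ _ x'])
    show "lin_on finsupp (\<lambda>x'. act (tmul (word u) x') y)"
      by (intro lin_onI) (simp_all add: tmul_tadd_right tmul_tsmult_right act_tadd_left
          act_tsmult_left)
    show "lin_on finsupp (\<lambda>x'. act (word u) (act x' y))"
      using y by (intro lin_onI) (simp_all add: act_tadd_left act_tsmult_left lin_on_tadd[OF
          lin_on_word_act]
          lin_on_tsmult[OF lin_on_word_act])
  qed (simp add: tmul_word_word word_act_append)
qed (simp_all add: x' tmul_tadd_left tmul_tsmult_left act_tadd_left act_tsmult_left)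

lemma act_deg1: "deg1 f \<Longrightarrow> act f y = deg1_act f y"
  by (induction f rule: deg1_induct)
     (simp_all add: act_tadd_left act_tsmult_left deg1_act_tadd_left deg1_act_tsmult_left
         deg1_finsupp)

lemma act_K1: "finsupp x \<Longrightarrow> y \<in> K1 \<Longrightarrow> act x y \<in> K1"
  by (rule lin_on_finsupp_mem[OF lin_on_act_left is_lideal_K1]) (simp_all add: word_act_K1)

lemma finsupp_bms_rel: "r \<in> bms_rel \<Longrightarrow> finsupp r"
  by (auto simp: bms_rel_def deg1_finsupp)

lemma I2_finsupp: "x \<in> I2 \<Longrightarrow> finsupp x"
  by (erule ideal_gen_finsupp) (rule finsupp_bms_rel)

lemma act_I2: "x \<in> I2 \<Longrightarrow> finsupp y \<Longrightarrow> act x y \<in> K1"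
proof (induction x arbitrary: y rule: ideal_gen.induct)
  case zero
  then show ?case by (simp add: lideal_tzero[OF is_lideal_K1])
next
  case (base s)
  then obtain a b where s: "s = tsub (tcomm (gen a) (gen b)) (bms_br a b)"
    unfolding bms_rel_def by blast
  have "act s y = act_defect (gen a) (gen b) y"
    unfolding s act_defect_def using base
    by (simp add: act_tsub_left deg1_finsupp act_tmul act_deg1 del: br_lin_gen_gen deg1_act_gen)
       (simp add: act_deg1[symmetric])
  also have "\<dots> \<in> K1"
    using base by (intro act_defect_mem[OF is_lideal_K1 act_defect_gens_tone]) simp_all
  finally show ?case .
next
  case (add x1 x2)
  then show ?case using I2_finsupp by (simp add: act_tadd_left lideal_tadd[OF is_lideal_K1])
next
  case (smult x c)
  then show ?case using I2_finsupp by (simp add: act_tsmult_left lideal_tsmult[OF is_lideal_K1])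
next
  case (lmult x a)
  then show ?case using I2_finsupp by (simp add: act_tmul act_K1)
next
  case (rmult x a)
  then show ?case using I2_finsupp by (simp add: act_tmul)
qed

lemma is_lideal_K2: "is_lideal K2"
  by (simp add: verma_ideal_def is_lideal_lideal_gen)

lemma K2_finsupp: "x \<in> K2 \<Longrightarrow> finsupp x"
  unfolding verma_ideal_def by (erule lideal_gen_finsupp) (auto simp: I2_finsupp)

lemma I2_K2: "x \<in> I2 \<Longrightarrow> x \<in> K2"
  by (simp add: verma_ideal_def lideal_gen.base)

lemma act_K2_tone:
  assumes "x \<in> K2"
  shows "act x tone \<in> K1"
  using assms[unfolded verma_ideal_def]
proof (induction x rule: lideal_gen.induct)
  case zero
  then show ?case by (simp add: lideal_tzero[OF is_lideal_K1])
next
  case (base s)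
  show ?case
  proof (cases "s \<in> I2")
    case True
    then show ?thesis by (simp add: act_I2)
  next
    case False
    with base have "act s tone = tzero"
      by (auto simp: act_tsub_left act_tsmult_left vac_def)
    then show ?thesis by (simp add: lideal_tzero[OF is_lideal_K1])
  qed
next
  case (add x1 x2)
  then show ?case using K2_finsupp by (simp add: verma_ideal_def act_tadd_left lideal_tadd[OF
      is_lideal_K1])
next
  case (smult x c)
  then show ?case using K2_finsupp by (simp add: verma_ideal_def act_tsmult_left lideal_tsmult[OF
      is_lideal_K1])
next
  case (lmult x a)
  then show ?case using K2_finsupp by (simp add: verma_ideal_def act_tmul act_K1)
qed


lemma deg1_act_emb_word:
  "deg1 \<beta> \<Longrightarrow> tsub (deg1_act (emb \<beta>) (word w)) (tmul \<beta> (word w)) \<in> K1"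
proof (induction w arbitrary: \<beta>)
  case Nil
  then show ?case using vac_emb by (simp add: tone_def[symmetric] deg1_act_tone deg1_finsupp)
next
  case (Cons d w)
  let ?w = "word w :: (bhat, 'k) tens" and ?d = "gen d :: (bhat, 'k) tens"
  let ?\<gamma> = "bhat_bracket \<beta> ?d"
  have "bms_bracket (emb \<beta>) (bhat_emb d) = emb ?\<gamma>"
    using emb_bhat_bracket[of \<beta> ?d] Cons.prems by simp
  have "tsub (deg1_act (emb \<beta>) (word (d # w))) (tmul \<beta> (word (d # w))) =
     tadd (tadd (tmul ?d (tsub (deg1_act (emb \<beta>) ?w) (tmul \<beta> ?w)))
         (tsub (deg1_act (emb ?\<gamma>) ?w) (tmul ?\<gamma> ?w)))
       (tsmult (-1) (tmul (tsub (tcomm \<beta> ?d) ?\<gamma>) ?w))"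
    using Cons.prems
    by (simp add: tmul_gen_word[symmetric] deg1_act_tmul_gen \<open>bms_bracket (emb \<beta>) (bhat_emb d) =
        emb ?\<gamma>\<close>
        tmul_assoc[symmetric] tmul_tsub_left tmul_tsub_right deg1_finsupp)
       (simp add: tmul_assoc deg1_finsupp tens_pointwise)
  moreover have "tmul (tsub (tcomm \<beta> ?d) ?\<gamma>) ?w \<in> K1"
    using Cons.prems by (intro I1_K1 ideal_gen.rmult bhat_rel_deg1) simp_all
  ultimately show ?case
    using Cons lideal_tadd[OF is_lideal_K1] lideal_tsmult[OF is_lideal_K1] lideal_tmul[OF is_lideal_K1]
    by simp
qed

lemma deg1_act_emb:
  assumes "deg1 \<beta>" "finsupp y"
  shows "tsub (deg1_act (emb \<beta>) y) (tmul \<beta> y) \<in> K1"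
proof (rule lin_on_finsupp_mem[where F = "\<lambda>y. tsub (deg1_act (emb \<beta>) y) (tmul \<beta> y)",
      OF _ is_lideal_K1 deg1_act_emb_word[OF assms(1)] assms(2)])
  show "lin_on finsupp (\<lambda>y. tsub (deg1_act (emb \<beta>) y) (tmul \<beta> y))"
    by (intro lin_onI) (simp_all add: deg1_act_tadd_right deg1_act_tsmult_right tmul_tadd_right
        tmul_tsmult_right,
        simp_all add: tens_pointwise algebra_simps)
qed

lemma act_emb_tone_word: "tsub (act (emb (word w)) tone) (word w) \<in> K1"
proof (induction w)
  case Nil
  then show ?case by (simp add: tone_def[symmetric] lideal_tzero[OF is_lideal_K1])
next
  case (Cons c w)
  let ?y = "act (emb (word w)) tone"
  have "emb (word (c # w)) = tmul (bhat_emb c) (emb (word w))"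
    by (simp add: tmul_gen_word[symmetric] tens_hom_tmul del: tens_hom_word)
  then have "tsub (act (emb (word (c # w))) tone) (word (c # w)) =
      tadd (deg1_act (bhat_emb c) (tsub ?y (word w)))
        (tsub (deg1_act (emb (gen c)) (word w)) (tmul (gen c) (word w)))"
    by (simp add: act_tmul act_deg1 deg1_act_tsub_right tmul_gen_word) (simp add: tens_pointwise)
  moreover have "deg1_act (bhat_emb c) (tsub ?y (word w)) \<in> K1"
    using Cons by (simp add: deg1_act_K1)
  moreover have "tsub (deg1_act (emb (gen c)) (word w)) (tmul (gen c) (word w)) \<in> K1"
    by (rule deg1_act_emb) simp_all
  ultimately show ?case using lideal_tadd[OF is_lideal_K1] by simp
qed

lemma act_emb_tone: "finsupp z \<Longrightarrow> tsub (act (emb z) tone) z \<in> K1"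
  by (rule lin_on_finsupp_mem[where F = "\<lambda>z. tsub (act (emb z) tone) z",
        OF _ is_lideal_K1 act_emb_tone_word])
     (intro lin_onI, simp_all add: emb_simps act_tadd_left act_tsmult_left, simp_all add:
         tens_pointwise algebra_simps)

lemma emb_I1: "x \<in> I1 \<Longrightarrow> emb x \<in> I2"
proof (induction x rule: ideal_gen.induct)
  case zero
  then show ?case by (simp add: ideal_gen.zero)
next
  case (base s)
  then obtain c d \<beta> where s: "s = tsub (tcomm (gen c) (gen d)) \<beta>"
    and \<beta>: "deg1 \<beta>" and emb_\<beta>: "emb \<beta> = bms_bracket (bhat_emb c) (bhat_emb d)"
    unfolding bhat_rel_def by blast
  then have "emb s = tsub (tcomm (bhat_emb c) (bhat_emb d)) (bms_bracket (bhat_emb c) (bhat_emb d))"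
    by (simp add: emb_simps tens_hom_tmul deg1_finsupp)
  then show ?case by (simp add: bms_rel_deg1)
next
  case (add x y)
  then show ?case using I1_finsupp by (simp add: emb_simps ideal_gen.add)
next
  case (smult x c)
  then show ?case using I1_finsupp by (simp add: emb_simps ideal_gen.smult)
next
  case (lmult x a)
  then show ?case using I1_finsupp by (simp add: tens_hom_tmul ideal_gen.lmult)
next
  case (rmult x a)
  then show ?case using I1_finsupp by (simp add: tens_hom_tmul ideal_gen.rmult)
qed

lemma K2_gens:
  "n > 0 \<Longrightarrow> gen (L n) \<in> K2" "n > 0 \<Longrightarrow> gen (M n) \<in> K2"
  "tsub (gen (L 0)) (tsmult hL tone) \<in> K2" "tsub (gen (M 0)) (tsmult hM tone) \<in> K2"
  "tsub (gen CL) (tsmult cL tone) \<in> K2" "tsub (gen CM) (tsmult cM tone) \<in> K2"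
  by (auto simp: verma_ideal_def intro: lideal_gen.base)

lemma emb_K1:
  assumes "x \<in> K1"
  shows "emb x \<in> K2"
  using assms[unfolded quot_ideal_def]
proof (induction x rule: lideal_gen.induct)
  case zero
  then show ?case by (simp add: lideal_tzero[OF is_lideal_K2])
next
  case (base s)
  then consider "s \<in> I1" | "s = tsub (gen (Pb 0)) (tsmult (2 * hM) tone)"
    | "s = tsub (gen CMb) (tsmult cM tone)"
    by blast
  then show ?case
  proof cases
    case 1
    then show ?thesis by (simp add: emb_I1 I2_K2)
  next
    case 2
    then have "emb s = tsmult 2 (tsub (gen (M 0)) (tsmult hM tone))"
      by (simp add: emb_simps bhat_emb_def) (simp add: tens_pointwise)
    then show ?thesis using K2_gens(4) lideal_tsmult[OF is_lideal_K2] by simp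
  next
    case 3
    then show ?thesis by (simp add: emb_simps) (simp add: bhat_emb_def K2_gens)
  qed
next
  case (add x y)
  then show ?case using K1_finsupp by (simp add: quot_ideal_def emb_simps lideal_tadd[OF
      is_lideal_K2])
next
  case (smult x c)
  then show ?case using K1_finsupp by (simp add: quot_ideal_def emb_simps lideal_tsmult[OF
      is_lideal_K2])
next
  case (lmult x a)
  then show ?case using K1_finsupp by (simp add: quot_ideal_def tens_hom_tmul lideal_tmul[OF
      is_lideal_K2])
qed

lemma plus_part_K2: "tsub (plus_part b) (tsmult (weight b) tone) \<in> K2"
proof (cases b)
  case (L n)
  then show ?thesis using K2_gens(1)[of n] K2_gens(1)[of "- n"] K2_gens(3)
    by (cases n "0::int" rule: linorder_cases) (simp_all add: plus_part_def weight_def)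
next
  case (M n)
  then show ?thesis using K2_gens(2)[of n] K2_gens(2)[of "- n"] K2_gens(4) lideal_tsmult[OF is_lideal_K2]
    by (cases n "0::int" rule: linorder_cases) (simp_all add: plus_part_def weight_def)
qed (simp_all add: plus_part_def weight_def K2_gens)

lemma emb_vac_gen: "tsub (gen b) (emb (vac b)) \<in> K2"
proof -
  have "tsub (gen b) (emb (vac b)) = tsub (plus_part b) (tsmult (weight b) tone)"
    by (subst gen_decomp) (simp add: vac_decomp emb_simps, simp add: tens_pointwise)
  then show ?thesis using plus_part_K2 by simp
qed

lemma emb_deg1_act_tone:
  assumes "deg1 f"
  shows "tsub f (emb (lin_gens vac f)) \<in> K2"
proof (rule lin_on_deg1_mem[where F = "\<lambda>f. tsub f (emb (lin_gens vac f))", OF _ is_lideal_K2 _ assms])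
  show "lin_on deg1 (\<lambda>f. tsub f (emb (lin_gens vac f)))"
    by (intro lin_onI) (simp_all add: lin_gens_tadd lin_gens_tsmult emb_simps,
        simp_all add: tens_pointwise algebra_simps)
qed (simp add: emb_vac_gen)

lemma emb_deg1_act_word:
  "deg1 f \<Longrightarrow> tsub (tmul f (emb (word w))) (emb (deg1_act f (word w))) \<in> K2"
proof (induction w arbitrary: f)
  case Nil
  then show ?case using emb_deg1_act_tone by (simp add: tone_def[symmetric] deg1_act_tone
      deg1_finsupp)
next
  case (Cons c w)
  let ?e = "bhat_emb c" and ?w = "emb (word w)"
  have "emb (word (c # w)) = tmul ?e ?w"
    by (simp add: tmul_gen_word[symmetric] tens_hom_tmul del: tens_hom_word)
  then have "tsub (tmul f (emb (word (c # w)))) (emb (deg1_act f (word (c # w)))) =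
     tadd (tadd (tmul (tsub (tcomm f ?e) (bms_bracket f ?e)) ?w)
         (tmul ?e (tsub (tmul f ?w) (emb (deg1_act f (word w))))))
       (tsub (tmul (bms_bracket f ?e) ?w) (emb (deg1_act (bms_bracket f ?e) (word w))))"
    using Cons.prems
    by (simp add: tmul_gen_word[symmetric] deg1_act_tmul_gen emb_simps tens_hom_tmul
        tmul_assoc[symmetric]
        tmul_tsub_left tmul_tsub_right deg1_finsupp del: tens_hom_word)
       (simp add: tmul_assoc deg1_finsupp tens_pointwise)
  moreover have "tmul (tsub (tcomm f ?e) (bms_bracket f ?e)) ?w \<in> K2"
    using Cons.prems by (intro I2_K2 ideal_gen.rmult bms_rel_deg1) simp_all
  ultimately show ?case
    using Cons lideal_tadd[OF is_lideal_K2] lideal_tmul[OF is_lideal_K2] by simp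
qed

lemma emb_deg1_act:
  assumes "deg1 f" "finsupp y"
  shows "tsub (tmul f (emb y)) (emb (deg1_act f y)) \<in> K2"
proof (rule lin_on_finsupp_mem[where F = "\<lambda>y. tsub (tmul f (emb y)) (emb (deg1_act f y))",
      OF _ is_lideal_K2 emb_deg1_act_word[OF assms(1)] assms(2)])
  show "lin_on finsupp (\<lambda>y. tsub (tmul f (emb y)) (emb (deg1_act f y)))"
    using assms(1) by (intro lin_onI) (simp_all add: deg1_act_tadd_right deg1_act_tsmult_right
        emb_simps
        tmul_tadd_right tmul_tsmult_right, simp_all add: tens_pointwise algebra_simps)
qed

lemma emb_act_tone_word: "tsub (word w) (emb (act (word w) tone)) \<in> K2"
proof (induction w)
  case Nil
  then show ?case by (simp add: tone_def[symmetric] lideal_tzero[OF is_lideal_K2])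
next
  case (Cons b w)
  let ?y = "act (word w) tone"
  have "tsub (word (b # w)) (emb (act (word (b # w)) tone)) =
      tadd (tmul (gen b) (tsub (word w) (emb ?y)))
        (tsub (tmul (gen b) (emb ?y)) (emb (deg1_act (gen b) ?y)))"
    by (simp add: tmul_gen_word tmul_tsub_right del: tens_hom_word) (simp add: tens_pointwise)
  moreover have "tsub (tmul (gen b) (emb ?y)) (emb (deg1_act (gen b) ?y)) \<in> K2"
    by (rule emb_deg1_act) simp_all
  ultimately show ?case
    using Cons lideal_tmul[OF is_lideal_K2] lideal_tadd[OF is_lideal_K2] by (simp del: tens_hom_word)
qed

lemma emb_act_tone: "finsupp u \<Longrightarrow> tsub u (emb (act u tone)) \<in> K2"
  by (rule lin_on_finsupp_mem[where F = "\<lambda>u. tsub u (emb (act u tone))",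
        OF _ is_lideal_K2 emb_act_tone_word])
     (intro lin_onI, simp_all add: act_tadd_left act_tsmult_left emb_simps, simp_all add:
         tens_pointwise algebra_simps)

end

section \<open>The isomorphism\<close>

lemma bhat_mod_isoI:
  fixes K1 :: "(bhat, 'k::field_char_0) tens set" and K2 :: "(bms, 'k) tens set"
    and \<psi> :: "(bms, 'k) tens \<Rightarrow> (bhat, 'k) tens"
  assumes K1: "is_lideal K1" and K2: "is_lideal K2"
    and emb_K1: "\<And>x. x \<in> K1 \<Longrightarrow> emb x \<in> K2"
    and \<psi>_K2: "\<And>x. x \<in> K2 \<Longrightarrow> \<psi> x \<in> K1"
    and finsupp_\<psi>: "\<And>u. finsupp u \<Longrightarrow> finsupp (\<psi> u)"
    and \<psi>_emb: "\<And>z. finsupp z \<Longrightarrow> tsub (\<psi> (emb z)) z \<in> K1"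
    and emb_\<psi>: "\<And>u. finsupp u \<Longrightarrow> tsub u (emb (\<psi> u)) \<in> K2"
  shows "bhat_mod_iso K1 K2"
  unfolding bhat_mod_iso_def
proof (intro exI[of _ emb] conjI allI impI)
  fix x y :: "(bhat, 'k) tens"
  assume x: "finsupp x" and y: "finsupp y"
  show "tsub (emb (tadd x y)) (tadd (emb x) (emb y)) \<in> K2"
    using x y lideal_tzero[OF K2] by (simp add: emb_simps)
  show "tsub x y \<in> K1 \<Longrightarrow> tsub (emb x) (emb y) \<in> K2"
    using x y emb_K1[of "tsub x y"] by (simp add: emb_simps)
  assume "tsub (emb x) (emb y) \<in> K2"
  with x y have "\<psi> (emb (tsub x y)) \<in> K1"
    by (simp add: emb_simps \<psi>_K2)
  then have "tsub (\<psi> (emb (tsub x y))) (tsub (\<psi> (emb (tsub x y))) (tsub x y)) \<in> K1"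
    using \<psi>_emb x y by (simp add: lideal_tsub[OF K1])
  then show "tsub x y \<in> K1"
    by (simp add: tens_pointwise)
next
  fix y :: "(bms, 'k) tens"
  assume "finsupp y"
  then show "\<exists>x. finsupp x \<and> tsub y (emb x) \<in> K2"
    using finsupp_\<psi> emb_\<psi> by blast
qed (simp_all add: emb_simps tens_hom_tmul lideal_tzero[OF K2])

theorem proposition3p5:
  fixes hL hM cL cM :: "'k::field_char_0"
  shows "bhat_mod_iso (quot_ideal hM cM) (verma_ideal hL hM cL cM)"
proof -
  interpret verma_weights hL hM cL cM .
  show ?thesis
    by (rule bhat_mod_isoI[where \<psi> = "\<lambda>u. act u tone"])
       (simp_all add: is_lideal_K1 is_lideal_K2 emb_K1 act_K2_tone act_emb_tone emb_act_tone)
qed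
end
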